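(* Let $N\ge 2$ and let $G$ be a connected oriented trivalent graph with $v$ vertices. Then $W_{sl(N)}(G)$, regarded as a function of $N$, is a polynomial in $N$ of degree at most $\frac{v}{2}+2$. (Consequently one may define $W_{sl(N)}^{\text{top}}(G)$ to be the coefficient of $N^{\frac{v}{2}+2}$ in this polynomial.)
   Context: An oriented trivalent graph is a finite graph (multiple edges and loops allowed) in which every vertex has degree 3, together with a cyclic ordering, at each vertex, of the three half-edges emanating from it. For a finite-dimensional metrized Lie algebra $L$ (a Lie algebra with an ad-invariant symmetric non-degenerate bilinear form $\langle\cdot,\cdot\rangle$), choose a basis $\{L_a\}_{a=1}^{\dim L}$, let $t_{ab}=\langle L_a,L_b\rangle$, let $(t^{ab})$ be the inverse matrix of $(t_{ab})$, and let $f_{abc}=\langle L_a,[L_b,L_c]\rangle$. For an oriented trivalent graph $G$, $W_L(G)$ is defined as follows: assign an index in $\{1,\dots,\dim L\}$ to every half-edge of $G$ and sum, over all such assignments, the product over all vertices of $f_{abc}$ (where $a,b,c$ are the indices on the three half-edges at that vertex read in their cyclic order) times the product over all edges of $t^{ab}$ (where $a,b$ are the indices on the two half-edges forming that edge). This is independent of the choice of basis. For $L=sl(N)$ the metric is the matrix trace in the defining representation: $\langle X,Y\rangle=\operatorname{tr}(XY)$. *)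

theory Defs
  imports Main "HOL-Library.FuncSet" "HOL-Computational_Algebra.Polynomial"
begin

text \<open>The half-edges are 0,...,3v-1; half-edge h is attached to vertex h div 3,
  and the cyclic order at vertex i is (3i, 3i+1, 3i+2).  The edges are given
  by a fixed-point-free involution e on the half-edges: {h, e h} is an edge.
  Loops and multiple edges are allowed.  Every oriented trivalent graph is
  isomorphic to one of this form.\<close>

definition otg :: "nat \<Rightarrow> (nat \<Rightarrow> nat) \<Rightarrow> bool" where
  "otg v e \<longleftrightarrow> (\<forall>h<3*v. e h < 3*v \<and> e h \<noteq> h \<and> e (e h) = h)"

definition otg_adj :: "nat \<Rightarrow> (nat \<Rightarrow> nat) \<Rightarrow> nat \<Rightarrow> nat \<Rightarrow> bool" where
  "otg_adj v e i j \<longleftrightarrow> (\<exists>h<3*v. h div 3 = i \<and> e h div 3 = j)"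

definition otg_connected :: "nat \<Rightarrow> (nat \<Rightarrow> nat) \<Rightarrow> bool" where
  "otg_connected v e \<longleftrightarrow> (\<forall>i<v. \<forall>j<v. (otg_adj v e)\<^sup>*\<^sup>* i j)"

text \<open>N x N complex matrices are functions nat => nat => complex vanishing outside
  the index range {0..<N}.\<close>

definition is_mat :: "nat \<Rightarrow> (nat \<Rightarrow> nat \<Rightarrow> complex) \<Rightarrow> bool" where
  "is_mat N X \<longleftrightarrow> (\<forall>i j. (N \<le> i \<or> N \<le> j) \<longrightarrow> X i j = 0)"

definition mmul :: "nat \<Rightarrow> (nat \<Rightarrow> nat \<Rightarrow> complex) \<Rightarrow> (nat \<Rightarrow> nat \<Rightarrow> complex) \<Rightarrow> (nat \<Rightarrow> nat \<Rightarrow> complex)" where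
  "mmul N X Y = (\<lambda>i j. if i < N \<and> j < N then (\<Sum>k<N. X i k * Y k j) else 0)"

definition mtr :: "nat \<Rightarrow> (nat \<Rightarrow> nat \<Rightarrow> complex) \<Rightarrow> complex" where
  "mtr N X = (\<Sum>i<N. X i i)"

definition mbracket :: "nat \<Rightarrow> (nat \<Rightarrow> nat \<Rightarrow> complex) \<Rightarrow> (nat \<Rightarrow> nat \<Rightarrow> complex) \<Rightarrow> (nat \<Rightarrow> nat \<Rightarrow> complex)" where
  "mbracket N X Y = (\<lambda>i j. mmul N X Y i j - mmul N Y X i j)"

definition sl :: "nat \<Rightarrow> (nat \<Rightarrow> nat \<Rightarrow> complex) set" where
  "sl N = {X. is_mat N X \<and> mtr N X = 0}"

definition lincomb :: "(nat \<Rightarrow> nat \<Rightarrow> complex) list \<Rightarrow> (nat \<Rightarrow> complex) \<Rightarrow> (nat \<Rightarrow> nat \<Rightarrow> complex)" where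
  "lincomb B c = (\<lambda>i j. \<Sum>a<length B. c a * (B ! a) i j)"

definition sl_basis :: "nat \<Rightarrow> (nat \<Rightarrow> nat \<Rightarrow> complex) list \<Rightarrow> bool" where
  "sl_basis N B \<longleftrightarrow>
     set B \<subseteq> sl N \<and>
     (\<forall>X\<in>sl N. \<exists>c. X = lincomb B c) \<and>
     (\<forall>c. lincomb B c = (\<lambda>i j. 0) \<longrightarrow> (\<forall>a<length B. c a = 0))"

definition tmet :: "nat \<Rightarrow> (nat \<Rightarrow> nat \<Rightarrow> complex) list \<Rightarrow> nat \<Rightarrow> nat \<Rightarrow> complex" where
  "tmet N B a b = mtr N (mmul N (B ! a) (B ! b))"

definition tinv :: "nat \<Rightarrow> (nat \<Rightarrow> nat \<Rightarrow> complex) list \<Rightarrow> nat \<Rightarrow> nat \<Rightarrow> complex" where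
  "tinv N B = (THE s. (\<forall>a b. (length B \<le> a \<or> length B \<le> b) \<longrightarrow> s a b = 0) \<and>
      (\<forall>a<length B. \<forall>c<length B.
         (\<Sum>b<length B. tmet N B a b * s b c) = (if a = c then 1 else 0)))"

definition fstr :: "nat \<Rightarrow> (nat \<Rightarrow> nat \<Rightarrow> complex) list \<Rightarrow> nat \<Rightarrow> nat \<Rightarrow> nat \<Rightarrow> complex" where
  "fstr N B a b c = mtr N (mmul N (B ! a) (mbracket N (B ! b) (B ! c)))"

definition W_sl :: "nat \<Rightarrow> (nat \<Rightarrow> nat \<Rightarrow> complex) list \<Rightarrow> nat \<Rightarrow> (nat \<Rightarrow> nat) \<Rightarrow> complex" where
  "W_sl N B v e =
     (\<Sum>\<sigma> \<in> {0..<3*v} \<rightarrow>\<^sub>E {0..<length B}.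
        (\<Prod>i<v. fstr N B (\<sigma> (3*i)) (\<sigma> (3*i+1)) (\<sigma> (3*i+2))) *
        (\<Prod>h \<in> {h. h < 3*v \<and> h < e h}. tinv N B (\<sigma> h) (\<sigma> (e h))))"

end

theory Submission
  imports Defs "Jordan_Normal_Form.Determinant"
begin

(* Completeness of sl(N) with respect to the trace form,
     sum_ab t^ab (L_a)_ij (L_b)_kl = delta_jk delta_il - (1/N) delta_ij delta_kl,
   together with f_abc = tr(L_a L_b L_c) - tr(L_a L_c L_b), written as a sum over the two
   cyclic orientations of each vertex, turns W(G) into a signed sum over vertex orientations
   eps of index sums over ribbon graphs.  The 1/N terms drop out: expanded, they put scalar
   matrices into arguments of tr(A [B, C]), which does not see them.  What remains is
   sum_eps (+-1) N^F(eps), with F(eps) the number of faces of the ribbon graph.  Its degree is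
   bounded by Euler's inequality F <= E - V + 2 = v/2 + 2 for connected G, which follows by
   counting mod 2 chains: sets of faces modulo the full set inject into the cycle space, whose
   dimension is E - V + 1. *)

section \<open>The trace form of sl(N) and its completeness relation\<close>

definition matrix_unit :: "nat \<times> nat \<Rightarrow> nat \<Rightarrow> nat \<Rightarrow> complex" where
  "matrix_unit \<kappa> i j = (if i = fst \<kappa> \<and> j = snd \<kappa> then 1 else 0)"

lemma mtr_mmul: "mtr N (mmul N X Y) = (\<Sum>i<N. \<Sum>k<N. X i k * Y k i)"
  by (simp add: mtr_def mmul_def)

lemma mtr_mmul_matrix_unit:
  assumes "p < N" "q < N"
  shows "mtr N (mmul N (matrix_unit (q, p)) Y) = Y p q"
proof -
  have "(\<Sum>k<N. matrix_unit (q, p) i k * Y k i) = (if i = q then Y p i else 0)" for i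
  proof -
    have "(\<Sum>k<N. matrix_unit (q, p) i k * Y k i) = (\<Sum>k<N. if k = p then (if i = q then Y k i else 0) else 0)"
      by (intro sum.cong) (auto simp: matrix_unit_def)
    then show ?thesis
      using assms(1) by simp
  qed
  then show ?thesis
    using assms(2) by (simp add: mtr_mmul)
qed

lemma mtr_mmul_diff_left:
  "mtr N (mmul N (\<lambda>i j. X i j - X' i j) Y) = mtr N (mmul N X Y) - mtr N (mmul N X' Y)"
  by (simp add: mtr_mmul left_diff_distrib sum_subtractf)

lemma sl_trace_form_nondegenerate:
  assumes N: "N \<ge> 1" and Y: "Y \<in> sl N"
    and orth: "\<And>X. X \<in> sl N \<Longrightarrow> mtr N (mmul N X Y) = 0"
  shows "Y = (\<lambda>i j. 0)"
proof -
  have off_diagonal: "Y p q = 0" if "p < N" "q < N" "p \<noteq> q" for p q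
  proof -
    have "matrix_unit (q, p) \<in> sl N"
      using that by (auto simp: sl_def is_mat_def mtr_def matrix_unit_def intro!: sum.neutral)
    then have "mtr N (mmul N (matrix_unit (q, p)) Y) = 0"
      by (rule orth)
    with mtr_mmul_matrix_unit[OF that(1,2)] show ?thesis
      by simp
  qed
  have diagonal: "Y p p = Y 0 0" if "p < N" for p
  proof -
    let ?X = "\<lambda>i j. matrix_unit (p, p) i j - matrix_unit (0, 0) i j"
    have "mtr N ?X = 0"
      using that N by (simp add: mtr_def matrix_unit_def sum_subtractf)
    moreover have "is_mat N ?X"
      using that by (auto simp: is_mat_def matrix_unit_def)
    ultimately have "?X \<in> sl N"
      by (simp add: sl_def)
    then have "mtr N (mmul N ?X Y) = 0"
      by (rule orth)
    then show ?thesis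
      using that N by (simp add: mtr_mmul_diff_left mtr_mmul_matrix_unit)
  qed
  have "0 = mtr N Y"
    using Y by (simp add: sl_def)
  also have "\<dots> = (\<Sum>i<N. Y 0 0)"
    unfolding mtr_def by (intro sum.cong refl diagonal) simp
  finally have "of_nat N * Y 0 0 = 0"
    by simp
  then have "Y 0 0 = 0"
    using N by simp
  have "Y p q = 0" for p q
  proof (cases "p < N \<and> q < N")
    case True
    then show ?thesis
      using off_diagonal[of p q] diagonal[of p] \<open>Y 0 0 = 0\<close> by (cases "p = q") auto
  next
    case False
    then show ?thesis
      using Y by (auto simp: sl_def is_mat_def)
  qed
  then show ?thesis
    by (intro ext)
qed

lemma lincomb_in_sl:
  assumes "set B \<subseteq> sl N"
  shows "lincomb B c \<in> sl N"
proof -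
  have "is_mat N (lincomb B c)"
    using assms unfolding is_mat_def lincomb_def sl_def by (auto intro!: sum.neutral simp: subset_iff)
  moreover have "mtr N (lincomb B c) = (\<Sum>a<length B. c a * mtr N (B ! a))"
    unfolding mtr_def lincomb_def by (simp add: sum_distrib_left sum.swap[of _ "{..<N}"])
  moreover have "\<dots> = 0"
    using assms by (auto intro!: sum.neutral simp: sl_def subset_iff)
  ultimately show ?thesis
    by (simp add: sl_def)
qed

lemma mtr_lincomb_left:
  "mtr N (mmul N (lincomb B c) Y) = (\<Sum>a<length B. c a * mtr N (mmul N (B ! a) Y))"
  unfolding mtr_mmul lincomb_def
  by (simp add: sum_distrib_left sum_distrib_right sum.swap[of _ "{..<length B}"] mult.assoc)

lemma mtr_lincomb_right:
  "mtr N (mmul N X (lincomb B c)) = (\<Sum>a<length B. c a * mtr N (mmul N X (B ! a)))"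
  unfolding mtr_mmul lincomb_def
  by (simp add: sum_distrib_left sum_distrib_right sum.swap[of _ "{..<length B}"] mult_ac)

definition gram_mat :: "nat \<Rightarrow> (nat \<Rightarrow> nat \<Rightarrow> complex) list \<Rightarrow> complex mat" where
  "gram_mat N B = mat (length B) (length B) (\<lambda>(a, b). tmet N B a b)"

lemma gram_mat_carrier: "gram_mat N B \<in> carrier_mat (length B) (length B)"
  by (simp add: gram_mat_def)

lemma gram_mat_mult_entry:
  assumes "a < length B" "c < length B"
  shows "(gram_mat N B * mat (length B) (length B) (\<lambda>(a, b). s a b)) $$ (a, c)
    = (\<Sum>b<length B. tmet N B a b * s b c)"
  using assms by (simp add: gram_mat_def scalar_prod_def atLeast0LessThan)

lemma det_gram_mat_nonzero:
  assumes N: "N \<ge> 2" and B: "sl_basis N B"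
  shows "det (gram_mat N B) \<noteq> 0"
proof
  let ?L = "length B"
  assume "det (gram_mat N B) = 0"
  then obtain x where x: "x \<in> carrier_vec ?L" "x \<noteq> 0\<^sub>v ?L" "gram_mat N B *\<^sub>v x = 0\<^sub>v ?L"
    using det_0_iff_vec_prod_zero_field[OF gram_mat_carrier] by auto
  define Y where "Y = lincomb B (\<lambda>b. x $ b)"
  have "Y \<in> sl N"
    using B by (simp add: Y_def sl_basis_def lincomb_in_sl)
  have basis_orth: "mtr N (mmul N (B ! a) Y) = 0" if a: "a < ?L" for a
  proof -
    have "mtr N (mmul N (B ! a) Y) = (\<Sum>b<?L. tmet N B a b * x $ b)"
      by (simp add: Y_def mtr_lincomb_right tmet_def mult.commute)
    also have "\<dots> = (gram_mat N B *\<^sub>v x) $ a"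
      using a x(1) by (simp add: gram_mat_def scalar_prod_def atLeast0LessThan)
    finally show ?thesis
      using x a by simp
  qed
  have "mtr N (mmul N X Y) = 0" if "X \<in> sl N" for X
  proof -
    obtain c where "X = lincomb B c"
      using B \<open>X \<in> sl N\<close> by (auto simp: sl_basis_def)
    then show ?thesis
      by (simp add: mtr_lincomb_left basis_orth)
  qed
  then have "Y = (\<lambda>i j. 0)"
    using sl_trace_form_nondegenerate[of N Y] N \<open>Y \<in> sl N\<close> by simp
  then have "\<forall>b<?L. x $ b = 0"
    using B unfolding sl_basis_def Y_def by blast
  then have "x = 0\<^sub>v ?L"
    using x(1) by (intro eq_vecI) auto
  then show False
    using x(2) by simp
qed

definition gram_inv :: "nat \<Rightarrow> (nat \<Rightarrow> nat \<Rightarrow> complex) list \<Rightarrow> complex mat" where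
  "gram_inv N B = (1 / det (gram_mat N B)) \<cdot>\<^sub>m adj_mat (gram_mat N B)"

lemma gram_inv_carrier: "gram_inv N B \<in> carrier_mat (length B) (length B)"
  using adj_mat[OF gram_mat_carrier] by (simp add: gram_inv_def)

lemma gram_mat_gram_inv:
  assumes "N \<ge> 2" "sl_basis N B"
  shows "gram_mat N B * gram_inv N B = 1\<^sub>m (length B)"
proof -
  let ?T = "gram_mat N B"
  have "?T * gram_inv N B = (1 / det ?T) \<cdot>\<^sub>m (?T * adj_mat ?T)"
    using gram_mat_carrier[of N B] adj_mat(1)[OF gram_mat_carrier[of N B]]
    by (simp add: gram_inv_def mult_smult_distrib)
  also have "\<dots> = 1\<^sub>m (length B)"
    using adj_mat(2)[OF gram_mat_carrier] det_gram_mat_nonzero[OF assms] by (auto intro!: eq_matI)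
  finally show ?thesis .
qed

lemma gram_inv_gram_mat:
  assumes "N \<ge> 2" "sl_basis N B"
  shows "gram_inv N B * gram_mat N B = 1\<^sub>m (length B)"
  using mat_mult_left_right_inverse[OF gram_mat_carrier gram_inv_carrier gram_mat_gram_inv[OF assms]] .

lemma tinv_eq_gram_inv:
  assumes N: "N \<ge> 2" and B: "sl_basis N B"
  shows "tinv N B = (\<lambda>a b. if a < length B \<and> b < length B then gram_inv N B $$ (a, b) else 0)"
    (is "_ = ?s")
proof -
  let ?L = "length B" and ?T = "gram_mat N B" and ?S = "gram_inv N B"
  let ?M = "\<lambda>s. mat ?L ?L (\<lambda>(a, b). s a b)"
  let ?P = "\<lambda>s. (\<forall>a b. (?L \<le> a \<or> ?L \<le> b) \<longrightarrow> s a b = 0) \<and>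
      (\<forall>a<?L. \<forall>c<?L. (\<Sum>b<?L. tmet N B a b * s b c) = (if a = c then (1::complex) else 0))"
  have "?P ?s"
  proof (intro conjI allI impI)
    fix a c
    assume ac: "a < ?L" "c < ?L"
    have "?M ?s = ?S"
      using gram_inv_carrier[of N B] by (intro eq_matI) auto
    then show "(\<Sum>b<?L. tmet N B a b * ?s b c) = (if a = c then 1 else 0)"
      using gram_mat_mult_entry[OF ac, of N ?s] gram_mat_gram_inv[OF N B] ac by simp
  qed auto
  moreover have "s = ?s" if s: "?P s" for s
  proof -
    define S where "S = ?M s"
    have "?T * S = 1\<^sub>m ?L"
    proof (rule eq_matI)
      fix a c
      assume "a < dim_row (1\<^sub>m ?L)" "c < dim_col (1\<^sub>m ?L)"
      then have ac: "a < ?L" "c < ?L"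
        by auto
      show "(?T * S) $$ (a, c) = 1\<^sub>m ?L $$ (a, c)"
        using gram_mat_mult_entry[OF ac, of N s] s ac by (simp add: S_def)
    qed (auto simp: gram_mat_def S_def)
    then have "S = ?S"
      using gram_inv_gram_mat[OF N B] gram_inv_carrier[of N B] gram_mat_carrier[of N B]
      by (metis S_def assoc_mult_mat left_mult_one_mat mat_carrier right_mult_one_mat)
    show ?thesis
    proof (intro ext)
      fix a b
      show "s a b = ?s a b"
      proof (cases "a < ?L \<and> b < ?L")
        case True
        then have "S $$ (a, b) = s a b"
          by (simp add: S_def)
        then show ?thesis
          using True \<open>S = ?S\<close> by simp
      next
        case False
        then show ?thesis
          using s by auto
      qed
    qed
  qed
  ultimately show ?thesis
    unfolding tinv_def by (rule the_equality)
qed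

lemma tmet_tinv:
  assumes N: "N \<ge> 2" and B: "sl_basis N B" and ac: "a < length B" "c < length B"
  shows "(\<Sum>b<length B. tmet N B a b * tinv N B b c) = (if a = c then 1 else 0)"
proof -
  let ?L = "length B"
  have "mat ?L ?L (\<lambda>(a, b). tinv N B a b) = gram_inv N B"
    using gram_inv_carrier[of N B] by (intro eq_matI) (auto simp: tinv_eq_gram_inv[OF N B])
  then show ?thesis
    using gram_mat_mult_entry[OF ac, of N "tinv N B"] gram_mat_gram_inv[OF N B] ac by simp
qed

lemma lincomb_coeff:
  assumes N: "N \<ge> 2" and B: "sl_basis N B" and b: "b < length B"
  shows "c b = (\<Sum>a<length B. mtr N (mmul N (lincomb B c) (B ! a)) * tinv N B a b)"
proof -
  let ?L = "length B"
  have "(\<Sum>a<?L. mtr N (mmul N (lincomb B c) (B ! a)) * tinv N B a b)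
      = (\<Sum>a<?L. \<Sum>d<?L. c d * (tmet N B d a * tinv N B a b))"
    by (simp add: mtr_lincomb_left tmet_def sum_distrib_right mult.assoc)
  also have "\<dots> = (\<Sum>d<?L. c d * (\<Sum>a<?L. tmet N B d a * tinv N B a b))"
    by (subst sum.swap) (simp add: sum_distrib_left)
  also have "\<dots> = (\<Sum>d<?L. if d = b then c d else 0)"
    by (intro sum.cong refl) (simp add: tmet_tinv[OF N B _ b])
  also have "\<dots> = c b"
    using b by simp
  finally show ?thesis ..
qed

definition traceless_unit :: "nat \<Rightarrow> nat \<Rightarrow> nat \<Rightarrow> nat \<Rightarrow> nat \<Rightarrow> complex" where
  "traceless_unit N i j = (\<lambda>r q. if r < N \<and> q < N then
     matrix_unit (j, i) r q - (if i = j \<and> r = q then 1 / of_nat N else 0) else 0)"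

lemma traceless_unit_in_sl:
  assumes "N \<ge> 1" "i < N" "j < N"
  shows "traceless_unit N i j \<in> sl N"
proof -
  have "mtr N (traceless_unit N i j)
      = (\<Sum>r<N. if r = j \<and> r = i then 1 else 0) - (\<Sum>r<N. if i = j then 1 / of_nat N else 0)"
    by (simp add: mtr_def traceless_unit_def matrix_unit_def sum_subtractf)
  also have "\<dots> = 0"
    using assms by (cases "i = j") (simp_all add: sum.neutral)
  finally show ?thesis
    by (simp add: sl_def is_mat_def traceless_unit_def)
qed

lemma mtr_mmul_cong_left:
  assumes "\<And>r q. r < N \<Longrightarrow> q < N \<Longrightarrow> X r q = X' r q"
  shows "mtr N (mmul N X Y) = mtr N (mmul N X' Y)"
  using assms by (simp add: mtr_mmul)

lemma mtr_mmul_traceless_unit: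
  assumes Y: "Y \<in> sl N" and "i < N" "j < N"
  shows "mtr N (mmul N (traceless_unit N i j) Y) = Y i j"
proof -
  define \<alpha> :: complex where "\<alpha> = (if i = j then 1 / of_nat N else 0)"
  have "mtr N (mmul N (traceless_unit N i j) Y)
      = mtr N (mmul N (\<lambda>r q. matrix_unit (j, i) r q - \<alpha> * (if r = q then 1 else 0)) Y)"
    by (rule mtr_mmul_cong_left) (simp add: traceless_unit_def \<alpha>_def)
  also have "\<dots> = Y i j - mtr N (mmul N (\<lambda>r q. \<alpha> * (if r = q then 1 else 0)) Y)"
    using assms(2,3) by (simp add: mtr_mmul_diff_left mtr_mmul_matrix_unit)
  also have "mtr N (mmul N (\<lambda>r q. \<alpha> * (if r = q then 1 else 0)) Y) = \<alpha> * mtr N Y"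
  proof -
    have "(\<Sum>k<N. \<alpha> * (if r = k then 1 else 0) * Y k r) = \<alpha> * Y r r" if "r < N" for r
    proof -
      have "(\<Sum>k<N. \<alpha> * (if r = k then 1 else 0) * Y k r) = (\<Sum>k<N. if k = r then \<alpha> * Y k r else 0)"
        by (intro sum.cong) auto
      then show ?thesis
        using that by simp
    qed
    then show ?thesis
      unfolding mtr_mmul by (simp add: mtr_def sum_distrib_left)
  qed
  finally show ?thesis
    using Y by (simp add: sl_def)
qed

lemma sl_completeness:
  assumes N: "N \<ge> 2" and B: "sl_basis N B" and idx: "i < N" "j < N" "k < N" "l < N"
  shows "(\<Sum>a<length B. \<Sum>b<length B. tinv N B a b * (B ! a) i j * (B ! b) k l)
     = (if j = k \<and> i = l then 1 else 0) - (if i = j \<and> k = l then 1 / of_nat N else 0)"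
proof -
  let ?L = "length B" and ?X = "traceless_unit N i j"
  obtain c where c: "?X = lincomb B c"
    using B traceless_unit_in_sl[of N i j] N idx by (auto simp: sl_basis_def)
  have coeff: "(\<Sum>a<?L. (B ! a) i j * tinv N B a b) = c b" if "b < ?L" for b
  proof -
    have "(B ! a) i j = mtr N (mmul N (lincomb B c) (B ! a))" if "a < ?L" for a
      using B that idx by (simp add: c[symmetric] mtr_mmul_traceless_unit sl_basis_def subset_iff)
    then show ?thesis
      using lincomb_coeff[OF N B that, of c] by simp
  qed
  have "(\<Sum>a<?L. \<Sum>b<?L. tinv N B a b * (B ! a) i j * (B ! b) k l)
      = (\<Sum>b<?L. (\<Sum>a<?L. (B ! a) i j * tinv N B a b) * (B ! b) k l)"
    by (subst sum.swap) (simp add: sum_distrib_left sum_distrib_right mult_ac)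
  also have "\<dots> = (\<Sum>b<?L. c b * (B ! b) k l)"
    by (intro sum.cong refl) (simp add: coeff)
  also have "\<dots> = ?X k l"
    by (simp add: c lincomb_def)
  also have "\<dots> = (if j = k \<and> i = l then 1 else 0) - (if i = j \<and> k = l then 1 / of_nat N else 0)"
    using idx by (auto simp: traceless_unit_def matrix_unit_def)
  finally show ?thesis .
qed

section \<open>Structure constants as traces\<close>

definition tr_bracket :: "nat \<Rightarrow> (nat \<Rightarrow> nat \<Rightarrow> complex) \<Rightarrow> (nat \<Rightarrow> nat \<Rightarrow> complex) \<Rightarrow>
    (nat \<Rightarrow> nat \<Rightarrow> complex) \<Rightarrow> complex" where
  "tr_bracket N A B C = mtr N (mmul N A (mbracket N B C))"

definition trace3 :: "nat \<Rightarrow> (nat \<Rightarrow> nat \<Rightarrow> complex) \<Rightarrow> (nat \<Rightarrow> nat \<Rightarrow> complex) \<Rightarrow>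
    (nat \<Rightarrow> nat \<Rightarrow> complex) \<Rightarrow> complex" where
  "trace3 N A B C = (\<Sum>x<N. \<Sum>y<N. \<Sum>z<N. A x y * B y z * C z x)"

lemma tr_bracket_eq_trace3: "tr_bracket N A B C = trace3 N A B C - trace3 N A C B"
proof -
  have "tr_bracket N A B C = (\<Sum>x<N. \<Sum>y<N. A x y * (\<Sum>z<N. B y z * C z x - C y z * B z x))"
    unfolding tr_bracket_def mtr_mmul
    by (intro sum.cong refl) (simp add: mbracket_def mmul_def sum_subtractf)
  then show ?thesis
    by (simp add: trace3_def sum_subtractf sum_distrib_left right_diff_distrib mult.assoc)
qed

lemma trace3_rotate: "trace3 N A B C = trace3 N B C A"
proof -
  have "trace3 N B C A = (\<Sum>y<N. \<Sum>z<N. \<Sum>x<N. A x y * B y z * C z x)"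
    unfolding trace3_def by (intro sum.cong refl) (simp add: mult_ac)
  also have "\<dots> = (\<Sum>y<N. \<Sum>x<N. \<Sum>z<N. A x y * B y z * C z x)"
    by (intro sum.cong refl sum.swap)
  also have "\<dots> = trace3 N A B C"
    unfolding trace3_def by (rule sum.swap)
  finally show ?thesis ..
qed

lemma tr_bracket_rotate: "tr_bracket N A B C = tr_bracket N B C A"
  using trace3_rotate[of N A B C] trace3_rotate[of N A C B] trace3_rotate[of N C B A]
  by (simp add: tr_bracket_eq_trace3)

lemma mtr_mmul_commute: "mtr N (mmul N A B) = mtr N (mmul N B A)"
  unfolding mtr_mmul by (subst sum.swap) (simp add: mult.commute)

definition scalar_shift :: "nat \<Rightarrow> (nat \<Rightarrow> nat \<Rightarrow> complex) \<Rightarrow> (nat \<Rightarrow> nat \<Rightarrow> complex) \<Rightarrow> bool" where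
  "scalar_shift N A' A \<longleftrightarrow> (\<exists>\<alpha>. \<forall>i<N. \<forall>j<N. A' i j = A i j + \<alpha> * (if i = j then 1 else 0))"

lemma trace3_scalar_shift_first:
  assumes shift: "\<forall>i<N. \<forall>j<N. A' i j = A i j + \<alpha> * (if i = j then 1 else 0)"
  shows "trace3 N A' B C = trace3 N A B C + \<alpha> * mtr N (mmul N B C)"
proof -
  define K where "K y x = (\<Sum>z<N. B y z * C z x)" for y x
  have trace3_K: "trace3 N X B C = (\<Sum>x<N. \<Sum>y<N. X x y * K y x)" for X
    by (simp add: trace3_def K_def sum_distrib_left mult.assoc)
  have "(\<Sum>y<N. A' x y * K y x) = (\<Sum>y<N. A x y * K y x) + \<alpha> * K x x" if "x < N" for x
  proof -
    have "(\<Sum>y<N. A' x y * K y x) = (\<Sum>y<N. A x y * K y x + (if y = x then \<alpha> * K y x else 0))"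
      using shift that by (intro sum.cong refl) (auto simp: algebra_simps)
    then show ?thesis
      using that by (simp add: sum.distrib)
  qed
  then have "trace3 N A' B C = trace3 N A B C + \<alpha> * (\<Sum>x<N. K x x)"
    by (simp add: trace3_K sum.distrib sum_distrib_left)
  then show ?thesis
    by (simp add: K_def mtr_mmul)
qed

lemma tr_bracket_scalar_shift_first:
  assumes "scalar_shift N A' A"
  shows "tr_bracket N A' B C = tr_bracket N A B C"
proof -
  obtain \<alpha> where \<alpha>: "\<forall>i<N. \<forall>j<N. A' i j = A i j + \<alpha> * (if i = j then 1 else 0)"
    using assms by (auto simp: scalar_shift_def)
  show ?thesis
    using trace3_scalar_shift_first[OF \<alpha>, of B C] trace3_scalar_shift_first[OF \<alpha>, of C B]
      mtr_mmul_commute[of N B C]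
    by (simp add: tr_bracket_eq_trace3)
qed

text \<open>By cyclicity, shift invariance in the first argument propagates to all three.\<close>

lemma tr_bracket_scalar_shift:
  assumes "scalar_shift N A' A" "scalar_shift N B' B" "scalar_shift N C' C"
  shows "tr_bracket N A' B' C' = tr_bracket N A B C"
  using assms by (metis tr_bracket_rotate tr_bracket_scalar_shift_first)

section \<open>Expansion over vertex orientations\<close>

definition turn :: "bool \<Rightarrow> nat \<Rightarrow> nat" where
  "turn b r = (if b then (r + 2) mod 3 else (r + 1) mod 3)"

definition orient_sign :: "bool \<Rightarrow> complex" where
  "orient_sign b = (if b then -1 else 1)"

definition triples :: "nat \<Rightarrow> (nat \<times> nat \<times> nat) set" where
  "triples N = {..<N} \<times> {..<N} \<times> {..<N}"

definition triple_nth :: "nat \<times> nat \<times> nat \<Rightarrow> nat \<Rightarrow> nat" where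
  "triple_nth t r = (if r = 0 then fst t else if r = 1 then fst (snd t) else snd (snd t))"

lemma finite_triples [simp]: "finite (triples N)"
  by (simp add: triples_def)

lemma turn_less_3: "turn b r < 3"
  by (simp add: turn_def)

lemma prod_lessThan_3:
  fixes f :: "nat \<Rightarrow> 'a :: comm_monoid_mult"
  shows "(\<Prod>r<3. f r) = f 0 * f 1 * f 2"
proof -
  have "{..<3::nat} = {0, 1, 2}"
    by auto
  then show ?thesis
    by (simp add: mult_ac)
qed

lemma sum_triples: "(\<Sum>t\<in>triples N. g t) = (\<Sum>x<N. \<Sum>y<N. \<Sum>z<N. g (x, y, z))"
  by (simp add: triples_def sum.cartesian_product)

lemma tr_bracket_orientations:
  "tr_bracket N (M 0) (M 1) (M 2) = (\<Sum>b\<in>UNIV. orient_sign b *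
     (\<Sum>t\<in>triples N. \<Prod>r<3. M r (triple_nth t r) (triple_nth t (turn b r))))"
proof -
  have nth: "triple_nth (x, y, z) 0 = x" "triple_nth (x, y, z) 1 = y" "triple_nth (x, y, z) 2 = z"
    for x y z
    by (simp_all add: triple_nth_def)
  have turns: "turn False 0 = 1" "turn False 1 = 2" "turn False 2 = 0"
    "turn True 0 = 2" "turn True 1 = 0" "turn True 2 = 1"
    by (simp_all add: turn_def)
  have positive: "(\<Sum>t\<in>triples N. \<Prod>r<3. M r (triple_nth t r) (triple_nth t (turn False r)))
      = trace3 N (M 0) (M 1) (M 2)"
    unfolding sum_triples prod_lessThan_3 nth turns trace3_def ..
  have "(\<Sum>t\<in>triples N. \<Prod>r<3. M r (triple_nth t r) (triple_nth t (turn True r)))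
      = (\<Sum>x<N. \<Sum>y<N. \<Sum>z<N. M 0 x z * M 2 z y * M 1 y x)"
    unfolding sum_triples prod_lessThan_3 nth turns by (simp add: mult_ac)
  also have "\<dots> = trace3 N (M 0) (M 2) (M 1)"
    unfolding trace3_def by (intro sum.cong refl sum.swap)
  finally have negative: "(\<Sum>t\<in>triples N. \<Prod>r<3. M r (triple_nth t r) (triple_nth t (turn True r)))
      = trace3 N (M 0) (M 2) (M 1)" .
  show ?thesis
    unfolding UNIV_bool by (simp add: positive negative orient_sign_def tr_bracket_eq_trace3)
qed

text \<open>An orientation \<open>\<epsilon>\<close> picks at vertex \<open>i\<close> the term \<open>tr (L_a L_b L_c)\<close> of \<open>f_abc\<close> if
  \<open>\<epsilon> i = False\<close> and the term \<open>- tr (L_a L_c L_b)\<close> if \<open>\<epsilon> i = True\<close>; \<open>vnext \<epsilon> h\<close> is the half-edge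
  following \<open>h\<close> around its vertex in the corresponding cyclic order.\<close>

definition vnext :: "(nat \<Rightarrow> bool) \<Rightarrow> nat \<Rightarrow> nat" where
  "vnext \<epsilon> h = 3 * (h div 3) + turn (\<epsilon> (h div 3)) (h mod 3)"

definition orientations :: "nat \<Rightarrow> (nat \<Rightarrow> bool) set" where
  "orientations v = PiE {..<v} (\<lambda>_. UNIV)"

definition orientation_sign :: "nat \<Rightarrow> (nat \<Rightarrow> bool) \<Rightarrow> complex" where
  "orientation_sign v \<epsilon> = (\<Prod>i<v. orient_sign (\<epsilon> i))"

definition labellings :: "nat \<Rightarrow> nat \<Rightarrow> (nat \<Rightarrow> nat) set" where
  "labellings N v = PiE {..<3 * v} (\<lambda>_. {..<N})"

definition vertex_prod :: "nat \<Rightarrow> nat \<Rightarrow> (nat \<Rightarrow> nat \<Rightarrow> nat \<Rightarrow> complex) \<Rightarrow> complex" where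
  "vertex_prod N v M = (\<Prod>i<v. tr_bracket N (M (3 * i)) (M (3 * i + 1)) (M (3 * i + 2)))"

lemma finite_orientations [simp]: "finite (orientations v)"
  by (simp add: orientations_def finite_PiE)

lemma finite_labellings [simp]: "finite (labellings N v)"
  by (simp add: labellings_def finite_PiE)

lemma labellings_less: "x \<in> labellings N v \<Longrightarrow> h < 3 * v \<Longrightarrow> x h < N"
  by (simp add: labellings_def PiE_iff)

lemma vnext_block: "r < 3 \<Longrightarrow> vnext \<epsilon> (3 * i + r) = 3 * i + turn (\<epsilon> i) r"
  by (simp add: vnext_def)

lemma vnext_less:
  assumes "h < 3 * v"
  shows "vnext \<epsilon> h < 3 * v"
proof -
  have "3 * (h div 3) + 3 \<le> 3 * v"
    using assms by presburger
  then show ?thesis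
    using turn_less_3[of "\<epsilon> (h div 3)" "h mod 3"] by (simp add: vnext_def)
qed

lemma prod_lessThan_blocks:
  fixes f :: "nat \<Rightarrow> 'a :: comm_monoid_mult" and v :: nat
  shows "(\<Prod>h<3 * v. f h) = (\<Prod>i<v. \<Prod>r<3. f (3 * i + r))"
proof (induction v)
  case (Suc v)
  have "{..<3 * Suc v} = {..<3 * v} \<union> {3 * v, 3 * v + 1, 3 * v + 2}"
    by auto
  then show ?case
    using Suc by (simp add: prod_lessThan_3 mult_ac)
qed simp

definition triple_label :: "(nat \<Rightarrow> nat \<times> nat \<times> nat) \<Rightarrow> nat \<Rightarrow> nat" where
  "triple_label y h = triple_nth (y (h div 3)) (h mod 3)"

lemma triple_label_block: "r < 3 \<Longrightarrow> triple_label y (3 * i + r) = triple_nth (y i) r"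
  by (simp add: triple_label_def)

lemma triple_label_less:
  assumes "y \<in> PiE {..<v} (\<lambda>_. triples N)" "h < 3 * v"
  shows "triple_label y h < N"
proof -
  have "h div 3 < v"
    using assms(2) by presburger
  then have "y (h div 3) \<in> triples N"
    using assms(1) by (simp add: PiE_iff)
  then show ?thesis
    by (auto simp: triple_label_def triple_nth_def triples_def)
qed

lemma triple_nth_block:
  assumes "r < 3"
  shows "triple_nth (x (3 * i), x (3 * i + 1), x (3 * i + 2)) r = x (3 * i + r)"
proof -
  have "r = 0 \<or> r = 1 \<or> r = 2"
    using assms by arith
  then show ?thesis
    by (auto simp: triple_nth_def)
qed

lemma bij_betw_triple_label:
  "bij_betw (\<lambda>y. restrict (triple_label y) {..<3 * v}) (PiE {..<v} (\<lambda>_. triples N)) (labellings N v)"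
proof (rule bij_betwI[where g = "\<lambda>x. restrict (\<lambda>i. (x (3 * i), x (3 * i + 1), x (3 * i + 2))) {..<v}"])
  show "(\<lambda>y. restrict (triple_label y) {..<3 * v}) \<in> PiE {..<v} (\<lambda>_. triples N) \<rightarrow> labellings N v"
    by (simp add: labellings_def triple_label_less)
  show "(\<lambda>x. restrict (\<lambda>i. (x (3 * i), x (3 * i + 1), x (3 * i + 2))) {..<v})
      \<in> labellings N v \<rightarrow> PiE {..<v} (\<lambda>_. triples N)"
  proof
    fix x
    assume "x \<in> labellings N v"
    then have "x h < N" if "h < 3 * v" for h
      using that by (simp add: labellings_def PiE_iff)
    then show "restrict (\<lambda>i. (x (3 * i), x (3 * i + 1), x (3 * i + 2))) {..<v} \<in> PiE {..<v} (\<lambda>_. triples N)"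
      by (simp add: triples_def)
  qed
next
  fix y
  assume y: "y \<in> PiE {..<v} (\<lambda>_. triples N)"
  show "restrict (\<lambda>i. (restrict (triple_label y) {..<3 * v} (3 * i),
      restrict (triple_label y) {..<3 * v} (3 * i + 1), restrict (triple_label y) {..<3 * v} (3 * i + 2)))
      {..<v} = y"
  proof
    fix i
    show "restrict (\<lambda>i. (restrict (triple_label y) {..<3 * v} (3 * i),
        restrict (triple_label y) {..<3 * v} (3 * i + 1), restrict (triple_label y) {..<3 * v} (3 * i + 2)))
        {..<v} i = y i"
    proof (cases "i < v")
      case True
      then show ?thesis
        using triple_label_block[of 0 y i] triple_label_block[of 1 y i] triple_label_block[of 2 y i]
        by (simp add: triple_nth_def)
    next
      case False
      then show ?thesis
        using y by (simp add: PiE_def extensional_def)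
    qed
  qed
next
  fix x
  assume x: "x \<in> labellings N v"
  show "restrict (triple_label (restrict (\<lambda>i. (x (3 * i), x (3 * i + 1), x (3 * i + 2))) {..<v}))
      {..<3 * v} = x"
  proof
    fix h
    show "restrict (triple_label (restrict (\<lambda>i. (x (3 * i), x (3 * i + 1), x (3 * i + 2))) {..<v}))
        {..<3 * v} h = x h"
    proof (cases "h < 3 * v")
      case True
      then have "h div 3 < v"
        by presburger
      then show ?thesis
        using True triple_nth_block[of "h mod 3" x "h div 3"] by (simp add: triple_label_def)
    next
      case False
      then show ?thesis
        using x by (simp add: labellings_def PiE_def extensional_def)
    qed
  qed
qed

lemma sum_triple_labels:
  "(\<Sum>y\<in>PiE {..<v} (\<lambda>_. triples N). \<Prod>h<3 * v. M h (triple_label y h) (triple_label y (vnext \<epsilon> h)))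
    = (\<Sum>x\<in>labellings N v. \<Prod>h<3 * v. M h (x h) (x (vnext \<epsilon> h)))"
proof -
  have "(\<Sum>x\<in>labellings N v. \<Prod>h<3 * v. M h (x h) (x (vnext \<epsilon> h)))
      = (\<Sum>y\<in>PiE {..<v} (\<lambda>_. triples N). \<Prod>h<3 * v. M h (restrict (triple_label y) {..<3 * v} h)
          (restrict (triple_label y) {..<3 * v} (vnext \<epsilon> h)))"
    by (rule sum.reindex_bij_betw[OF bij_betw_triple_label, symmetric])
  also have "\<dots> = (\<Sum>y\<in>PiE {..<v} (\<lambda>_. triples N).
      \<Prod>h<3 * v. M h (triple_label y h) (triple_label y (vnext \<epsilon> h)))"
    by (intro sum.cong prod.cong refl) (simp_all add: vnext_less)
  finally show ?thesis ..
qed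

lemma vertex_prod_orientations:
  "vertex_prod N v M = (\<Sum>\<epsilon>\<in>orientations v. orientation_sign v \<epsilon> *
     (\<Sum>x\<in>labellings N v. \<Prod>h<3 * v. M h (x h) (x (vnext \<epsilon> h))))"
proof -
  let ?Y = "PiE {..<v} (\<lambda>_. triples N)"
  let ?corner = "\<lambda>i b t. \<Prod>r<3. M (3 * i + r) (triple_nth t r) (triple_nth t (turn b r))"
  have "vertex_prod N v M = (\<Prod>i<v. \<Sum>b\<in>UNIV. orient_sign b * (\<Sum>t\<in>triples N. ?corner i b t))"
    unfolding vertex_prod_def
  proof (rule prod.cong[OF refl])
    fix i
    show "tr_bracket N (M (3 * i)) (M (3 * i + 1)) (M (3 * i + 2))
        = (\<Sum>b\<in>UNIV. orient_sign b * (\<Sum>t\<in>triples N. ?corner i b t))"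
      using tr_bracket_orientations[of N "\<lambda>r. M (3 * i + r)"] by simp
  qed
  also have "\<dots> = (\<Sum>\<epsilon>\<in>orientations v. \<Prod>i<v. orient_sign (\<epsilon> i) * (\<Sum>t\<in>triples N. ?corner i (\<epsilon> i) t))"
    unfolding orientations_def by (rule prod_sum_PiE) auto
  also have "\<dots> = (\<Sum>\<epsilon>\<in>orientations v. orientation_sign v \<epsilon> *
      (\<Sum>x\<in>labellings N v. \<Prod>h<3 * v. M h (x h) (x (vnext \<epsilon> h))))"
  proof (rule sum.cong[OF refl])
    fix \<epsilon>
    have "(\<Prod>i<v. \<Sum>t\<in>triples N. ?corner i (\<epsilon> i) t) = (\<Sum>y\<in>?Y. \<Prod>i<v. ?corner i (\<epsilon> i) (y i))"
      by (rule prod_sum_PiE) auto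
    also have "\<dots> = (\<Sum>y\<in>?Y. \<Prod>h<3 * v. M h (triple_label y h) (triple_label y (vnext \<epsilon> h)))"
      unfolding prod_lessThan_blocks
      by (intro sum.cong prod.cong refl) (simp add: vnext_block triple_label_block turn_less_3)
    also have "\<dots> = (\<Sum>x\<in>labellings N v. \<Prod>h<3 * v. M h (x h) (x (vnext \<epsilon> h)))"
      by (rule sum_triple_labels)
    finally show "(\<Prod>i<v. orient_sign (\<epsilon> i) * (\<Sum>t\<in>triples N. ?corner i (\<epsilon> i) t))
        = orientation_sign v \<epsilon> * (\<Sum>x\<in>labellings N v. \<Prod>h<3 * v. M h (x h) (x (vnext \<epsilon> h)))"
      by (simp add: orientation_sign_def prod.distrib)
  qed
  finally show ?thesis .
qed

section \<open>Edges as a fixed-point-free involution\<close>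

definition edge_reps :: "nat \<Rightarrow> (nat \<Rightarrow> nat) \<Rightarrow> nat set" where
  "edge_reps v e = {h. h < 3 * v \<and> h < e h}"

lemma finite_edge_reps [simp]: "finite (edge_reps v e)"
  by (simp add: edge_reps_def)

lemma otgD:
  assumes "otg v e" "h < 3 * v"
  shows "e h < 3 * v" "e h \<noteq> h" "e (e h) = h"
  using assms by (auto simp: otg_def)

lemma edge_reps_less: "h \<in> edge_reps v e \<Longrightarrow> h < 3 * v"
  by (simp add: edge_reps_def)

lemma edge_reps_partner_less: "otg v e \<Longrightarrow> h \<in> edge_reps v e \<Longrightarrow> e h < 3 * v"
  by (simp add: edge_reps_def otgD)

lemma edge_reps_partner_notin: "otg v e \<Longrightarrow> h \<in> edge_reps v e \<Longrightarrow> e h \<notin> edge_reps v e"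
  by (auto simp: edge_reps_def otgD)

lemma edge_reps_partner_in:
  "otg v e \<Longrightarrow> h < 3 * v \<Longrightarrow> h \<notin> edge_reps v e \<Longrightarrow> e h \<in> edge_reps v e"
  using otgD[of v e h] by (auto simp: edge_reps_def)

lemma half_edges_eq_edge_reps_Un:
  assumes "otg v e"
  shows "{..<3 * v} = edge_reps v e \<union> e ` edge_reps v e"
proof (intro equalityI subsetI)
  fix h
  assume "h \<in> {..<3 * v}"
  then show "h \<in> edge_reps v e \<union> e ` edge_reps v e"
    using assms edge_reps_partner_in[of v e h] otgD(3)[of v e h] by (cases "h \<in> edge_reps v e") force+
qed (use assms edge_reps_less edge_reps_partner_less in auto)

lemma edge_reps_disjoint: "otg v e \<Longrightarrow> edge_reps v e \<inter> e ` edge_reps v e = {}"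
  using edge_reps_partner_notin by blast

lemma inj_on_edge_reps: "otg v e \<Longrightarrow> inj_on e (edge_reps v e)"
  by (intro inj_onI) (metis edge_reps_less otgD(3))

lemma card_edge_reps:
  assumes "otg v e"
  shows "2 * card (edge_reps v e) = 3 * v"
proof -
  have "3 * v = card (edge_reps v e \<union> e ` edge_reps v e)"
    using half_edges_eq_edge_reps_Un[OF assms] by (metis card_lessThan)
  also have "\<dots> = card (edge_reps v e) + card (e ` edge_reps v e)"
    using edge_reps_disjoint[OF assms] by (intro card_Un_disjoint) auto
  also have "card (e ` edge_reps v e) = card (edge_reps v e)"
    by (rule card_image[OF inj_on_edge_reps[OF assms]])
  finally show ?thesis
    by simp
qed

lemma prod_half_edges:
  fixes f :: "nat \<Rightarrow> 'a :: comm_monoid_mult"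
  assumes "otg v e"
  shows "(\<Prod>h<3 * v. f h) = (\<Prod>h\<in>edge_reps v e. f h * f (e h))"
proof -
  have "(\<Prod>h<3 * v. f h) = (\<Prod>h\<in>edge_reps v e. f h) * (\<Prod>h\<in>e ` edge_reps v e. f h)"
    unfolding half_edges_eq_edge_reps_Un[OF assms]
    using edge_reps_disjoint[OF assms] by (intro prod.union_disjoint) auto
  also have "(\<Prod>h\<in>e ` edge_reps v e. f h) = (\<Prod>h\<in>edge_reps v e. f (e h))"
    using prod.reindex[OF inj_on_edge_reps[OF assms]] by simp
  finally show ?thesis
    by (simp add: prod.distrib)
qed

lemma bij_betw_edge_pairs:
  assumes o: "otg v e"
  shows "bij_betw (\<lambda>\<sigma>. restrict (\<lambda>h. (\<sigma> h, \<sigma> (e h))) (edge_reps v e))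
    (PiE {..<3 * v} (\<lambda>_. A)) (PiE (edge_reps v e) (\<lambda>_. A \<times> A))"
proof -
  let ?H = "{..<3 * v}" and ?E = "edge_reps v e"
  define \<pi> where "\<pi> = (\<lambda>\<sigma>::nat \<Rightarrow> 'a. restrict (\<lambda>h. (\<sigma> h, \<sigma> (e h))) ?E)"
  define \<gamma> where "\<gamma> = (\<lambda>\<tau>::nat \<Rightarrow> 'a \<times> 'a. restrict (\<lambda>h. if h \<in> ?E then fst (\<tau> h) else snd (\<tau> (e h))) ?H)"
  have "bij_betw \<pi> (PiE ?H (\<lambda>_. A)) (PiE ?E (\<lambda>_. A \<times> A))"
  proof (rule bij_betwI[where g = \<gamma>])
    show "\<pi> \<in> PiE ?H (\<lambda>_. A) \<rightarrow> PiE ?E (\<lambda>_. A \<times> A)"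
      using edge_reps_less edge_reps_partner_less[OF o] by (auto simp: \<pi>_def PiE_def Pi_def)
    show "\<gamma> \<in> PiE ?E (\<lambda>_. A \<times> A) \<rightarrow> PiE ?H (\<lambda>_. A)"
    proof
      fix \<tau>
      assume \<tau>: "\<tau> \<in> PiE ?E (\<lambda>_. A \<times> A)"
      have "(if h \<in> ?E then fst (\<tau> h) else snd (\<tau> (e h))) \<in> A" if "h \<in> ?H" for h
        using \<tau> that edge_reps_partner_in[OF o, of h] by (cases "h \<in> ?E") (auto simp: PiE_def Pi_def)
      then show "\<gamma> \<tau> \<in> PiE ?H (\<lambda>_. A)"
        unfolding \<gamma>_def restrict_PiE_iff by blast
    qed
  next
    fix \<sigma>
    assume \<sigma>: "\<sigma> \<in> PiE ?H (\<lambda>_. A)"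
    show "\<gamma> (\<pi> \<sigma>) = \<sigma>"
    proof
      fix h
      show "\<gamma> (\<pi> \<sigma>) h = \<sigma> h"
      proof (cases "h \<in> ?H")
        case True
        then show ?thesis
          using edge_reps_partner_in[OF o, of h] otgD(3)[OF o, of h] by (simp add: \<gamma>_def \<pi>_def)
      next
        case False
        then show ?thesis
          using \<sigma> by (simp add: \<gamma>_def PiE_def extensional_def)
      qed
    qed
  next
    fix \<tau>
    assume \<tau>: "\<tau> \<in> PiE ?E (\<lambda>_. A \<times> A)"
    show "\<pi> (\<gamma> \<tau>) = \<tau>"
    proof
      fix h
      show "\<pi> (\<gamma> \<tau>) h = \<tau> h"
      proof (cases "h \<in> ?E")
        case True
        then show ?thesis
          using edge_reps_less[of h] edge_reps_partner_less[OF o True] edge_reps_partner_notin[OF o True]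
            otgD(3)[OF o, of h]
          by (simp add: \<gamma>_def \<pi>_def)
      next
        case False
        then show ?thesis
          using \<tau> by (simp add: \<pi>_def PiE_def extensional_def)
      qed
    qed
  qed
  then show ?thesis
    by (simp only: \<pi>_def)
qed

lemma sum_prod_edge_reps:
  fixes w :: "nat \<Rightarrow> 'b \<Rightarrow> 'b \<Rightarrow> 'a :: comm_semiring_1"
  assumes "otg v e" and "finite A"
  shows "(\<Sum>\<sigma>\<in>PiE {..<3 * v} (\<lambda>_. A). \<Prod>h\<in>edge_reps v e. w h (\<sigma> h) (\<sigma> (e h)))
    = (\<Prod>h\<in>edge_reps v e. \<Sum>a\<in>A. \<Sum>b\<in>A. w h a b)"
proof -
  let ?g = "\<lambda>\<tau>. \<Prod>h\<in>edge_reps v e. w h (fst (\<tau> h)) (snd (\<tau> h))"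
  have "(\<Sum>\<sigma>\<in>PiE {..<3 * v} (\<lambda>_. A). \<Prod>h\<in>edge_reps v e. w h (\<sigma> h) (\<sigma> (e h)))
      = (\<Sum>\<sigma>\<in>PiE {..<3 * v} (\<lambda>_. A). ?g (restrict (\<lambda>h. (\<sigma> h, \<sigma> (e h))) (edge_reps v e)))"
    by (intro sum.cong prod.cong refl) simp_all
  also have "\<dots> = (\<Sum>\<tau>\<in>PiE (edge_reps v e) (\<lambda>_. A \<times> A). ?g \<tau>)"
    by (rule sum.reindex_bij_betw[OF bij_betw_edge_pairs[OF assms(1)]])
  also have "\<dots> = (\<Prod>h\<in>edge_reps v e. \<Sum>p\<in>A \<times> A. w h (fst p) (snd p))"
    using assms(2) by (intro prod_sum_PiE[symmetric]) auto
  finally show ?thesis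
    by (simp add: sum.cartesian_product case_prod_beta)
qed

section \<open>The ribbon-graph expansion of the weight\<close>

definition propagator :: "complex \<Rightarrow> nat \<Rightarrow> nat \<Rightarrow> nat \<Rightarrow> nat \<Rightarrow> complex" where
  "propagator \<mu> i j k l = (if j = k \<and> i = l then 1 else 0) - \<mu> * (if i = j \<and> k = l then 1 else 0)"

definition ribbon_sum :: "nat \<Rightarrow> nat \<Rightarrow> (nat \<Rightarrow> nat) \<Rightarrow> complex \<Rightarrow> complex" where
  "ribbon_sum N v e \<mu> = (\<Sum>\<epsilon>\<in>orientations v. orientation_sign v \<epsilon> * (\<Sum>x\<in>labellings N v.
     \<Prod>h\<in>edge_reps v e. propagator \<mu> (x h) (x (vnext \<epsilon> h)) (x (e h)) (x (vnext \<epsilon> (e h)))))"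

lemma sum_basis_assignments:
  fixes L :: nat
  assumes "otg v e"
  shows "(\<Sum>\<sigma>\<in>PiE {..<3 * v} (\<lambda>_. {..<L}). (\<Prod>h<3 * v. g h (\<sigma> h)) *
      (\<Prod>h\<in>edge_reps v e. t (\<sigma> h) (\<sigma> (e h))))
    = (\<Prod>h\<in>edge_reps v e. \<Sum>a<L. \<Sum>b<L. t a b * g h a * g (e h) b :: complex)"
proof -
  have "(\<Prod>h<3 * v. g h (\<sigma> h)) * (\<Prod>h\<in>edge_reps v e. t (\<sigma> h) (\<sigma> (e h)))
      = (\<Prod>h\<in>edge_reps v e. t (\<sigma> h) (\<sigma> (e h)) * g h (\<sigma> h) * g (e h) (\<sigma> (e h)))" for \<sigma>
    unfolding prod_half_edges[OF assms, of "\<lambda>h. g h (\<sigma> h)"] by (simp add: prod.distrib mult_ac)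
  then show ?thesis
    using sum_prod_edge_reps[OF assms finite_lessThan, of "\<lambda>h a b. t a b * g h a * g (e h) b"] by simp
qed

lemma prod_edges_completeness:
  assumes o: "otg v e" and N: "N \<ge> 2" and B: "sl_basis N B" and x: "x \<in> labellings N v"
  shows "(\<Sum>\<sigma>\<in>PiE {..<3 * v} (\<lambda>_. {..<length B}). (\<Prod>h<3 * v. (B ! \<sigma> h) (x h) (x (vnext \<epsilon> h))) *
      (\<Prod>h\<in>edge_reps v e. tinv N B (\<sigma> h) (\<sigma> (e h))))
    = (\<Prod>h\<in>edge_reps v e. propagator (1 / of_nat N) (x h) (x (vnext \<epsilon> h)) (x (e h)) (x (vnext \<epsilon> (e h))))"
proof -
  have "(\<Sum>\<sigma>\<in>PiE {..<3 * v} (\<lambda>_. {..<length B}). (\<Prod>h<3 * v. (B ! \<sigma> h) (x h) (x (vnext \<epsilon> h))) *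
      (\<Prod>h\<in>edge_reps v e. tinv N B (\<sigma> h) (\<sigma> (e h))))
    = (\<Prod>h\<in>edge_reps v e. \<Sum>a<length B. \<Sum>b<length B.
        tinv N B a b * (B ! a) (x h) (x (vnext \<epsilon> h)) * (B ! b) (x (e h)) (x (vnext \<epsilon> (e h))))"
    by (rule sum_basis_assignments[OF o, where g = "\<lambda>h a. (B ! a) (x h) (x (vnext \<epsilon> h))"])
  also have "\<dots> = (\<Prod>h\<in>edge_reps v e.
      propagator (1 / of_nat N) (x h) (x (vnext \<epsilon> h)) (x (e h)) (x (vnext \<epsilon> (e h))))"
  proof (rule prod.cong[OF refl])
    fix h
    assume h: "h \<in> edge_reps v e"
    then have "x h < N" "x (vnext \<epsilon> h) < N" "x (e h) < N" "x (vnext \<epsilon> (e h)) < N"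
      using edge_reps_less edge_reps_partner_less[OF o] by (blast intro: labellings_less[OF x] vnext_less)+
    from sl_completeness[OF N B this]
    show "(\<Sum>a<length B. \<Sum>b<length B. tinv N B a b * (B ! a) (x h) (x (vnext \<epsilon> h)) *
          (B ! b) (x (e h)) (x (vnext \<epsilon> (e h))))
        = propagator (1 / of_nat N) (x h) (x (vnext \<epsilon> h)) (x (e h)) (x (vnext \<epsilon> (e h)))"
      by (simp add: propagator_def)
  qed
  finally show ?thesis .
qed

lemma W_sl_eq_ribbon_sum:
  assumes o: "otg v e" and N: "N \<ge> 2" and B: "sl_basis N B"
  shows "W_sl N B v e = ribbon_sum N v e (1 / of_nat N)"
proof -
  let ?\<Sigma> = "PiE {..<3 * v} (\<lambda>_. {..<length B})"
  define Q where "Q \<sigma> \<epsilon> x = (\<Prod>h<3 * v. (B ! \<sigma> h) (x h) (x (vnext \<epsilon> h)))" for \<sigma> \<epsilon> x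
  define T where "T \<sigma> = (\<Prod>h\<in>edge_reps v e. tinv N B (\<sigma> h) (\<sigma> (e h)))" for \<sigma>
  have "W_sl N B v e = (\<Sum>\<sigma>\<in>?\<Sigma>. vertex_prod N v (\<lambda>h. B ! \<sigma> h) * T \<sigma>)"
    unfolding W_sl_def vertex_prod_def fstr_def tr_bracket_def T_def edge_reps_def atLeast0LessThan ..
  also have "\<dots> = (\<Sum>\<sigma>\<in>?\<Sigma>. \<Sum>\<epsilon>\<in>orientations v. \<Sum>x\<in>labellings N v.
      orientation_sign v \<epsilon> * (Q \<sigma> \<epsilon> x * T \<sigma>))"
    unfolding vertex_prod_orientations Q_def by (simp add: sum_distrib_right sum_distrib_left mult.assoc)
  also have "\<dots> = (\<Sum>\<epsilon>\<in>orientations v. \<Sum>\<sigma>\<in>?\<Sigma>. \<Sum>x\<in>labellings N v.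
      orientation_sign v \<epsilon> * (Q \<sigma> \<epsilon> x * T \<sigma>))"
    by (rule sum.swap)
  also have "\<dots> = (\<Sum>\<epsilon>\<in>orientations v. \<Sum>x\<in>labellings N v. \<Sum>\<sigma>\<in>?\<Sigma>.
      orientation_sign v \<epsilon> * (Q \<sigma> \<epsilon> x * T \<sigma>))"
    by (rule sum.cong[OF refl], rule sum.swap)
  also have "\<dots> = (\<Sum>\<epsilon>\<in>orientations v. orientation_sign v \<epsilon> *
      (\<Sum>x\<in>labellings N v. \<Sum>\<sigma>\<in>?\<Sigma>. Q \<sigma> \<epsilon> x * T \<sigma>))"
    by (simp add: sum_distrib_left)
  also have "\<dots> = ribbon_sum N v e (1 / of_nat N)"
    unfolding ribbon_sum_def
  proof (intro sum.cong refl arg_cong2[where f = times])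
    fix \<epsilon> x
    assume "x \<in> labellings N v"
    then show "(\<Sum>\<sigma>\<in>?\<Sigma>. Q \<sigma> \<epsilon> x * T \<sigma>) = (\<Prod>h\<in>edge_reps v e.
        propagator (1 / of_nat N) (x h) (x (vnext \<epsilon> h)) (x (e h)) (x (vnext \<epsilon> (e h))))"
      unfolding Q_def T_def by (rule prod_edges_completeness[OF o N B])
  qed
  finally show ?thesis .
qed

section \<open>Decoupling of the trace part\<close>

definition shifted_unit :: "complex \<Rightarrow> nat \<times> nat \<Rightarrow> nat \<Rightarrow> nat \<Rightarrow> complex" where
  "shifted_unit \<mu> \<kappa> i j = matrix_unit \<kappa> i j - \<mu> * (if fst \<kappa> = snd \<kappa> \<and> i = j then 1 else 0)"

lemma propagator_split:
  assumes "i < N" "j < N" "k < N" "l < N"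
  shows "propagator \<mu> i j k l
    = (\<Sum>\<kappa>\<in>{..<N} \<times> {..<N}. shifted_unit \<mu> \<kappa> i j * matrix_unit (prod.swap \<kappa>) k l)"
proof -
  have "(\<Sum>\<kappa>\<in>{..<N} \<times> {..<N}. shifted_unit \<mu> \<kappa> i j * matrix_unit (prod.swap \<kappa>) k l)
     = (\<Sum>\<kappa>\<in>{..<N} \<times> {..<N}. (if \<kappa> = (i, j) then (if j = k \<and> i = l then 1 else 0) else 0))
       - \<mu> * (\<Sum>\<kappa>\<in>{..<N} \<times> {..<N}. (if \<kappa> = (k, k) then (if i = j \<and> k = l then 1 else 0) else 0))"
    unfolding sum_distrib_left sum_subtractf[symmetric]
    by (intro sum.cong refl) (auto simp: shifted_unit_def matrix_unit_def)
  also have "\<dots> = propagator \<mu> i j k l"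
    using assms by (simp add: propagator_def)
  finally show ?thesis ..
qed

definition edge_matrices :: "nat \<Rightarrow> (nat \<Rightarrow> nat) \<Rightarrow> complex \<Rightarrow> (nat \<Rightarrow> nat \<times> nat) \<Rightarrow>
    nat \<Rightarrow> nat \<Rightarrow> nat \<Rightarrow> complex" where
  "edge_matrices v e \<mu> \<tau> h =
    (if h \<in> edge_reps v e then shifted_unit \<mu> (\<tau> h) else matrix_unit (prod.swap (\<tau> (e h))))"

lemma prod_propagators_split:
  assumes o: "otg v e" and x: "x \<in> labellings N v"
  shows "(\<Prod>h\<in>edge_reps v e. propagator \<mu> (x h) (x (vnext \<epsilon> h)) (x (e h)) (x (vnext \<epsilon> (e h))))
    = (\<Sum>\<tau>\<in>PiE (edge_reps v e) (\<lambda>_. {..<N} \<times> {..<N}).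
        \<Prod>h<3 * v. edge_matrices v e \<mu> \<tau> h (x h) (x (vnext \<epsilon> h)))"
proof -
  let ?E = "edge_reps v e"
  let ?term = "\<lambda>\<kappa> h. shifted_unit \<mu> \<kappa> (x h) (x (vnext \<epsilon> h)) *
    matrix_unit (prod.swap \<kappa>) (x (e h)) (x (vnext \<epsilon> (e h)))"
  have "(\<Prod>h\<in>?E. propagator \<mu> (x h) (x (vnext \<epsilon> h)) (x (e h)) (x (vnext \<epsilon> (e h))))
      = (\<Prod>h\<in>?E. \<Sum>\<kappa>\<in>{..<N} \<times> {..<N}. ?term \<kappa> h)"
    using edge_reps_less edge_reps_partner_less[OF o]
    by (intro prod.cong refl propagator_split labellings_less[OF x] vnext_less) blast+
  also have "\<dots> = (\<Sum>\<tau>\<in>PiE ?E (\<lambda>_. {..<N} \<times> {..<N}). \<Prod>h\<in>?E. ?term (\<tau> h) h)"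
    by (rule prod_sum_PiE) auto
  also have "\<dots> = (\<Sum>\<tau>\<in>PiE ?E (\<lambda>_. {..<N} \<times> {..<N}).
      \<Prod>h<3 * v. edge_matrices v e \<mu> \<tau> h (x h) (x (vnext \<epsilon> h)))"
  proof (rule sum.cong[OF refl])
    fix \<tau>
    have "edge_matrices v e \<mu> \<tau> h (x h) (x (vnext \<epsilon> h)) *
        edge_matrices v e \<mu> \<tau> (e h) (x (e h)) (x (vnext \<epsilon> (e h))) = ?term (\<tau> h) h"
      if "h \<in> ?E" for h
      using that edge_reps_partner_notin[OF o that] otgD(3)[OF o edge_reps_less[OF that]]
      by (simp add: edge_matrices_def)
    then show "(\<Prod>h\<in>?E. ?term (\<tau> h) h) = (\<Prod>h<3 * v. edge_matrices v e \<mu> \<tau> h (x h) (x (vnext \<epsilon> h)))"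
      by (simp add: prod_half_edges[OF o])
  qed
  finally show ?thesis .
qed

lemma ribbon_sum_eq_sum_vertex_prod:
  assumes "otg v e"
  shows "ribbon_sum N v e \<mu>
    = (\<Sum>\<tau>\<in>PiE (edge_reps v e) (\<lambda>_. {..<N} \<times> {..<N}). vertex_prod N v (edge_matrices v e \<mu> \<tau>))"
proof -
  let ?T = "PiE (edge_reps v e) (\<lambda>_. {..<N} \<times> {..<N})"
  let ?f = "\<lambda>\<epsilon> \<tau> x. \<Prod>h<3 * v. edge_matrices v e \<mu> \<tau> h (x h) (x (vnext \<epsilon> h))"
  have "ribbon_sum N v e \<mu> = (\<Sum>\<epsilon>\<in>orientations v. orientation_sign v \<epsilon> *
      (\<Sum>x\<in>labellings N v. \<Sum>\<tau>\<in>?T. ?f \<epsilon> \<tau> x))"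
    unfolding ribbon_sum_def by (simp add: prod_propagators_split[OF assms] cong: sum.cong)
  also have "\<dots> = (\<Sum>\<epsilon>\<in>orientations v. \<Sum>\<tau>\<in>?T. orientation_sign v \<epsilon> * (\<Sum>x\<in>labellings N v. ?f \<epsilon> \<tau> x))"
    by (subst sum.swap) (simp add: sum_distrib_left)
  also have "\<dots> = (\<Sum>\<tau>\<in>?T. vertex_prod N v (edge_matrices v e \<mu> \<tau>))"
    by (subst sum.swap) (simp add: vertex_prod_orientations)
  finally show ?thesis .
qed

lemma vertex_prod_edge_matrices:
  "vertex_prod N v (edge_matrices v e \<mu> \<tau>) = vertex_prod N v (edge_matrices v e 0 \<tau>)"
proof -
  have "scalar_shift N (edge_matrices v e \<mu> \<tau> h) (edge_matrices v e 0 \<tau> h)" for h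
    unfolding scalar_shift_def
    by (rule exI[of _ "if h \<in> edge_reps v e \<and> fst (\<tau> h) = snd (\<tau> h) then - \<mu> else 0"])
      (auto simp: edge_matrices_def shifted_unit_def)
  then show ?thesis
    unfolding vertex_prod_def by (intro prod.cong refl tr_bracket_scalar_shift)
qed

lemma ribbon_sum_eq_ribbon_sum_0: "otg v e \<Longrightarrow> ribbon_sum N v e \<mu> = ribbon_sum N v e 0"
  by (simp add: ribbon_sum_eq_sum_vertex_prod vertex_prod_edge_matrices[of N v e \<mu>])

section \<open>Counting labellings that are constant along faces\<close>

lemma bij_betw_quotient_functions:
  assumes R: "equiv H R"
  shows "bij_betw (\<lambda>c. restrict (\<lambda>h. c (R `` {h})) H) (PiE (H // R) (\<lambda>_. S))
    {x \<in> PiE H (\<lambda>_. S). \<forall>(a, b)\<in>R. x a = x b}"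
proof -
  let ?I = "{x \<in> PiE H (\<lambda>_. S). \<forall>(a, b)\<in>R. x a = x b}"
  define \<Phi> where "\<Phi> c = restrict (\<lambda>h. c (R `` {h})) H" for c :: "'a set \<Rightarrow> 'b"
  define \<Gamma> where "\<Gamma> x = restrict (\<lambda>C. x (SOME h. h \<in> C)) (H // R)" for x :: "'a \<Rightarrow> 'b"
  have rep: "(SOME h. h \<in> C) \<in> C" if C: "C \<in> H // R" for C
  proof -
    obtain a where "a \<in> H" "C = R `` {a}"
      using C unfolding quotient_def by blast
    then have "a \<in> C"
      using equiv_class_self[OF R] by blast
    then show ?thesis
      by (rule someI)
  qed
  have class_subset: "C \<subseteq> H" if "C \<in> H // R" for C
    using that equiv_type[OF R] unfolding quotient_def by blast
  have class_eq: "R `` {h} = C" if "C \<in> H // R" "h \<in> C" for C h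
    using that R by (metis Image_singleton_iff equiv_class_eq quotientE)
  have "bij_betw \<Phi> (PiE (H // R) (\<lambda>_. S)) ?I"
  proof (rule bij_betwI[where g = \<Gamma>])
    show "\<Phi> \<in> PiE (H // R) (\<lambda>_. S) \<rightarrow> ?I"
    proof
      fix c
      assume c: "c \<in> PiE (H // R) (\<lambda>_. S)"
      have "\<Phi> c \<in> PiE H (\<lambda>_. S)"
        using c by (simp add: \<Phi>_def PiE_iff quotientI)
      moreover have "\<Phi> c a = \<Phi> c b" if "(a, b) \<in> R" for a b
        using that equiv_type[OF R] equiv_class_eq[OF R that] by (auto simp: \<Phi>_def)
      ultimately show "\<Phi> c \<in> ?I"
        by blast
    qed
    show "\<Gamma> \<in> ?I \<rightarrow> PiE (H // R) (\<lambda>_. S)"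
      using rep class_subset by (fastforce simp: \<Gamma>_def PiE_iff)
  next
    fix c
    assume c: "c \<in> PiE (H // R) (\<lambda>_. S)"
    show "\<Gamma> (\<Phi> c) = c"
    proof
      fix C
      show "\<Gamma> (\<Phi> c) C = c C"
        using c rep[of C] class_eq[of C] class_subset[of C]
        by (cases "C \<in> H // R") (auto simp: \<Gamma>_def \<Phi>_def PiE_def extensional_def)
    qed
  next
    fix x
    assume x: "x \<in> ?I"
    show "\<Phi> (\<Gamma> x) = x"
    proof
      fix h
      show "\<Phi> (\<Gamma> x) h = x h"
      proof (cases "h \<in> H")
        case True
        then have "R `` {h} \<in> H // R"
          by (rule quotientI)
        then have "(h, SOME h'. h' \<in> R `` {h}) \<in> R"
          using rep by blast
        then show ?thesis
          using x True \<open>R `` {h} \<in> H // R\<close> by (auto simp: \<Phi>_def \<Gamma>_def)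
      next
        case False
        then show ?thesis
          using x by (simp add: \<Phi>_def PiE_def extensional_def)
      qed
    qed
  qed
  then show ?thesis
    by (simp add: \<Phi>_def[abs_def])
qed

lemma card_class_functions:
  assumes "finite H" "equiv H R" "finite S"
  shows "card {x \<in> PiE H (\<lambda>_. S). \<forall>(a, b)\<in>R. x a = x b} = card S ^ card (H // R)"
proof -
  have "card {x \<in> PiE H (\<lambda>_. S). \<forall>(a, b)\<in>R. x a = x b} = card (PiE (H // R) (\<lambda>_. S))"
    by (rule bij_betw_same_card[OF bij_betw_quotient_functions[OF assms(2)], symmetric])
  also have "\<dots> = card S ^ card (H // R)"
    using finite_quotient[OF assms(1) equiv_type[OF assms(2)]] by (simp add: card_PiE)
  finally show ?thesis .
qed

definition orbit_step :: "'a set \<Rightarrow> ('a \<Rightarrow> 'a) \<Rightarrow> ('a \<times> 'a) set" where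
  "orbit_step H \<phi> = {(a, \<phi> a) | a. a \<in> H} \<union> {(\<phi> a, a) | a. a \<in> H}"

definition orbit_rel :: "'a set \<Rightarrow> ('a \<Rightarrow> 'a) \<Rightarrow> ('a \<times> 'a) set" where
  "orbit_rel H \<phi> = (H \<times> H) \<inter> (orbit_step H \<phi>)\<^sup>*"

lemma equiv_orbit_rel: "equiv H (orbit_rel H \<phi>)"
proof (rule equivI)
  show "refl_on H (orbit_rel H \<phi>)"
    by (auto simp: refl_on_def orbit_rel_def)
  have "sym ((orbit_step H \<phi>)\<^sup>*)"
    by (intro sym_rtrancl) (auto simp: sym_def orbit_step_def)
  then show "sym (orbit_rel H \<phi>)"
    unfolding orbit_rel_def sym_def by blast
  show "trans (orbit_rel H \<phi>)"
    unfolding orbit_rel_def trans_def by (auto intro: rtrancl_trans)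
qed (auto simp: orbit_rel_def)

lemma invariant_iff_constant_on_orbits:
  assumes "\<forall>h\<in>H. \<phi> h \<in> H"
  shows "(\<forall>h\<in>H. x h = x (\<phi> h)) \<longleftrightarrow> (\<forall>(a, b)\<in>orbit_rel H \<phi>. x a = x b)"
proof
  assume inv: "\<forall>h\<in>H. x h = x (\<phi> h)"
  have "x a = x b" if "(a, b) \<in> (orbit_step H \<phi>)\<^sup>*" for a b
    using that by (induction rule: rtrancl_induct) (use inv in \<open>auto simp: orbit_step_def\<close>)
  then show "\<forall>(a, b)\<in>orbit_rel H \<phi>. x a = x b"
    by (auto simp: orbit_rel_def)
next
  assume "\<forall>(a, b)\<in>orbit_rel H \<phi>. x a = x b"
  moreover have "(h, \<phi> h) \<in> orbit_rel H \<phi>" if "h \<in> H" for h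
    using that assms by (auto simp: orbit_rel_def orbit_step_def)
  ultimately show "\<forall>h\<in>H. x h = x (\<phi> h)"
    by blast
qed

lemma card_invariant_functions:
  assumes "finite H" "\<forall>h\<in>H. \<phi> h \<in> H" "finite S"
  shows "card {x \<in> PiE H (\<lambda>_. S). \<forall>h\<in>H. x h = x (\<phi> h)} = card S ^ card (H // orbit_rel H \<phi>)"
proof -
  have "{x \<in> PiE H (\<lambda>_. S). \<forall>h\<in>H. x h = x (\<phi> h)}
      = {x \<in> PiE H (\<lambda>_. S). \<forall>(a, b)\<in>orbit_rel H \<phi>. x a = x b}"
    using invariant_iff_constant_on_orbits[OF assms(2)] by blast
  then show ?thesis
    using card_class_functions[OF assms(1) equiv_orbit_rel assms(3)] by simp
qed

text \<open>The faces of the ribbon graph are the orbits of the permutation that crosses an edge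
  and then turns at the vertex reached.\<close>

definition faces :: "nat \<Rightarrow> (nat \<Rightarrow> nat) \<Rightarrow> (nat \<Rightarrow> bool) \<Rightarrow> nat" where
  "faces v e \<epsilon> = card ({..<3 * v} // orbit_rel {..<3 * v} (\<lambda>h. vnext \<epsilon> (e h)))"

lemma face_step_less: "otg v e \<Longrightarrow> h < 3 * v \<Longrightarrow> vnext \<epsilon> (e h) < 3 * v"
  by (simp add: vnext_less otgD)

lemma propagator_0: "propagator 0 i j k l = of_bool (j = k \<and> i = l)"
  by (simp add: propagator_def)

lemma prod_of_bool: "finite A \<Longrightarrow> (\<Prod>a\<in>A. of_bool (P a)) = (of_bool (\<forall>a\<in>A. P a) :: 'b :: comm_semiring_1)"
  by (induction A rule: finite_induct) auto

lemma edge_conditions_iff_face_invariant: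
  assumes o: "otg v e"
  shows "(\<forall>h\<in>edge_reps v e. x (vnext \<epsilon> h) = x (e h) \<and> x h = x (vnext \<epsilon> (e h)))
    \<longleftrightarrow> (\<forall>h<3 * v. x h = x (vnext \<epsilon> (e h)))"
proof
  assume edges: "\<forall>h\<in>edge_reps v e. x (vnext \<epsilon> h) = x (e h) \<and> x h = x (vnext \<epsilon> (e h))"
  show "\<forall>h<3 * v. x h = x (vnext \<epsilon> (e h))"
  proof (intro allI impI)
    fix h
    assume h: "h < 3 * v"
    show "x h = x (vnext \<epsilon> (e h))"
    proof (cases "h \<in> edge_reps v e")
      case True
      then show ?thesis
        using edges by blast
    next
      case False
      then show ?thesis
        using edges edge_reps_partner_in[OF o h False] otgD(3)[OF o h] by force
    qed
  qed
next
  assume faces: "\<forall>h<3 * v. x h = x (vnext \<epsilon> (e h))"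
  show "\<forall>h\<in>edge_reps v e. x (vnext \<epsilon> h) = x (e h) \<and> x h = x (vnext \<epsilon> (e h))"
    using faces edge_reps_less edge_reps_partner_less[OF o] otgD(3)[OF o] by (metis edge_reps_less)
qed

lemma ribbon_sum_0:
  assumes o: "otg v e"
  shows "ribbon_sum N v e 0 = (\<Sum>\<epsilon>\<in>orientations v. orientation_sign v \<epsilon> * of_nat N ^ faces v e \<epsilon>)"
  unfolding ribbon_sum_def
proof (intro sum.cong refl arg_cong2[where f = times])
  fix \<epsilon>
  have "(\<Sum>x\<in>labellings N v. \<Prod>h\<in>edge_reps v e.
        propagator 0 (x h) (x (vnext \<epsilon> h)) (x (e h)) (x (vnext \<epsilon> (e h))))
      = (\<Sum>x\<in>labellings N v. of_bool (\<forall>h<3 * v. x h = x (vnext \<epsilon> (e h))))"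
    by (simp add: propagator_0 prod_of_bool edge_conditions_iff_face_invariant[OF o])
  also have "\<dots> = of_nat (card {x \<in> labellings N v. \<forall>h<3 * v. x h = x (vnext \<epsilon> (e h))})"
    by (simp add: Collect_conj_eq Int_commute)
  also have "\<dots> = of_nat N ^ faces v e \<epsilon>"
    using card_invariant_functions[of "{..<3 * v}" "\<lambda>h. vnext \<epsilon> (e h)" "{..<N}"] face_step_less[OF o]
    by (simp add: labellings_def faces_def Ball_def)
  finally show "(\<Sum>x\<in>labellings N v. \<Prod>h\<in>edge_reps v e.
        propagator 0 (x h) (x (vnext \<epsilon> h)) (x (e h)) (x (vnext \<epsilon> (e h))))
      = of_nat N ^ faces v e \<epsilon>" .
qed

section \<open>Euler's inequality for the faces\<close>

lemma card_eq_sum_card_fibres: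
  assumes "finite A"
  shows "card A = (\<Sum>y\<in>f ` A. card {x \<in> A. f x = y})"
proof -
  have "A = (\<Union>y\<in>f ` A. {x \<in> A. f x = y})"
    by blast
  also have "card \<dots> = (\<Sum>y\<in>f ` A. card {x \<in> A. f x = y})"
    using assms by (intro card_UN_disjoint) auto
  finally show ?thesis .
qed

lemma card_le_card_image_mult:
  assumes "finite A" "\<And>y. y \<in> f ` A \<Longrightarrow> card {x \<in> A. f x = y} \<le> k"
  shows "card A \<le> card (f ` A) * k"
  using card_eq_sum_card_fibres[OF assms(1), of f] sum_bounded_above[of "f ` A" _ k] assms(2)
  by simp

lemma card_image_mult_le_card:
  assumes "finite A" "\<And>y. y \<in> f ` A \<Longrightarrow> k \<le> card {x \<in> A. f x = y}"
  shows "card (f ` A) * k \<le> card A"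
  using card_eq_sum_card_fibres[OF assms(1), of f] sum_bounded_below[of "f ` A" k] assms(2)
  by simp

text \<open>Mod 2 chains of the ribbon graph are encoded as Boolean functions on the half-edges:
  a set of faces by a function constant along faces, a set of edges by a function constant
  along edges; sets of vertices are Boolean functions on the vertices.\<close>

definition mod2_chains :: "nat \<Rightarrow> (nat \<Rightarrow> bool) set" where
  "mod2_chains v = PiE {..<3 * v} (\<lambda>_. UNIV)"

definition chain_add :: "nat \<Rightarrow> (nat \<Rightarrow> bool) \<Rightarrow> (nat \<Rightarrow> bool) \<Rightarrow> nat \<Rightarrow> bool" where
  "chain_add v a b = restrict (\<lambda>h. a h \<noteq> b h) {..<3 * v}"

definition face_chains :: "nat \<Rightarrow> (nat \<Rightarrow> nat) \<Rightarrow> (nat \<Rightarrow> bool) \<Rightarrow> (nat \<Rightarrow> bool) set" where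
  "face_chains v e \<epsilon> = {c \<in> mod2_chains v. \<forall>h<3 * v. c h = c (vnext \<epsilon> (e h))}"

definition edge_chains :: "nat \<Rightarrow> (nat \<Rightarrow> nat) \<Rightarrow> (nat \<Rightarrow> bool) set" where
  "edge_chains v e = {g \<in> mod2_chains v. \<forall>h<3 * v. g h = g (e h)}"

definition face_boundary :: "nat \<Rightarrow> (nat \<Rightarrow> nat) \<Rightarrow> (nat \<Rightarrow> bool) \<Rightarrow> nat \<Rightarrow> bool" where
  "face_boundary v e c = restrict (\<lambda>h. c h \<noteq> c (e h)) {..<3 * v}"

definition vertex_boundary :: "nat \<Rightarrow> (nat \<Rightarrow> bool) \<Rightarrow> nat \<Rightarrow> bool" where
  "vertex_boundary v g = restrict (\<lambda>i. g (3 * i) \<noteq> (g (3 * i + 1) \<noteq> g (3 * i + 2))) {..<v}"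

definition cycles :: "nat \<Rightarrow> (nat \<Rightarrow> nat) \<Rightarrow> (nat \<Rightarrow> bool) set" where
  "cycles v e = {g \<in> edge_chains v e. \<forall>i<v. \<not> vertex_boundary v g i}"

lemma finite_mod2_chains [simp]: "finite (mod2_chains v)"
  by (simp add: mod2_chains_def finite_PiE)

lemma finite_face_chains [simp]: "finite (face_chains v e \<epsilon>)"
  by (simp add: face_chains_def)

lemma finite_edge_chains [simp]: "finite (edge_chains v e)"
  by (simp add: edge_chains_def)

lemma finite_cycles [simp]: "finite (cycles v e)"
  by (simp add: cycles_def)

lemma mod2_chains_eqI: "a \<in> mod2_chains v \<Longrightarrow> b \<in> mod2_chains v \<Longrightarrow> (\<And>h. h < 3 * v \<Longrightarrow> a h = b h) \<Longrightarrow> a = b"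
  unfolding mod2_chains_def by (rule PiE_ext) auto

lemma chain_add_cancel: "a \<in> mod2_chains v \<Longrightarrow> b \<in> mod2_chains v \<Longrightarrow> chain_add v (chain_add v a b) b = a"
  by (rule mod2_chains_eqI) (auto simp: chain_add_def mod2_chains_def)

lemma chain_add_face_chains:
  "otg v e \<Longrightarrow> a \<in> face_chains v e \<epsilon> \<Longrightarrow> b \<in> face_chains v e \<epsilon> \<Longrightarrow> chain_add v a b \<in> face_chains v e \<epsilon>"
  using face_step_less by (auto simp: face_chains_def chain_add_def mod2_chains_def)

lemma chain_add_edge_chains:
  "otg v e \<Longrightarrow> a \<in> edge_chains v e \<Longrightarrow> b \<in> edge_chains v e \<Longrightarrow> chain_add v a b \<in> edge_chains v e"
  using otgD(1) by (auto simp: edge_chains_def chain_add_def mod2_chains_def)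

lemma vertex_boundary_chain_add:
  "i < v \<Longrightarrow> vertex_boundary v (chain_add v a b) i = (vertex_boundary v a i \<noteq> vertex_boundary v b i)"
  by (auto simp: vertex_boundary_def chain_add_def)

lemma card_face_chains: "otg v e \<Longrightarrow> card (face_chains v e \<epsilon>) = 2 ^ faces v e \<epsilon>"
  using card_invariant_functions[of "{..<3 * v}" "\<lambda>h. vnext \<epsilon> (e h)" "UNIV :: bool set"] face_step_less
  by (simp add: face_chains_def mod2_chains_def faces_def Ball_def)

lemma card_edge_chains_le:
  assumes o: "otg v e"
  shows "card (edge_chains v e) \<le> 2 ^ card (edge_reps v e)"
proof -
  have "inj_on (\<lambda>g. restrict g (edge_reps v e)) (edge_chains v e)"
  proof
    fix g g'
    assume g: "g \<in> edge_chains v e" and g': "g' \<in> edge_chains v e"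
      and eq: "restrict g (edge_reps v e) = restrict g' (edge_reps v e)"
    have on_reps: "g h = g' h" if "h \<in> edge_reps v e" for h
      using eq that by (metis restrict_apply')
    show "g = g'"
    proof (rule mod2_chains_eqI)
      show "g \<in> mod2_chains v" "g' \<in> mod2_chains v"
        using g g' by (auto simp: edge_chains_def)
    next
      fix h
      assume h: "h < 3 * v"
      show "g h = g' h"
      proof (cases "h \<in> edge_reps v e")
        case False
        then have "e h \<in> edge_reps v e"
          using edge_reps_partner_in[OF o h] by simp
        then show ?thesis
          using g g' h on_reps by (auto simp: edge_chains_def)
      qed (rule on_reps)
    qed
  qed
  then have "card (edge_chains v e) = card ((\<lambda>g. restrict g (edge_reps v e)) ` edge_chains v e)"
    by (simp add: card_image)
  also have "\<dots> \<le> card (PiE (edge_reps v e) (\<lambda>_. UNIV :: bool set))"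
    by (intro card_mono) (auto simp: finite_PiE)
  also have "\<dots> = 2 ^ card (edge_reps v e)"
    by (simp add: card_PiE)
  finally show ?thesis .
qed

lemma face_boundary_in_cycles:
  assumes o: "otg v e" and c: "c \<in> face_chains v e \<epsilon>"
  shows "face_boundary v e c \<in> cycles v e"
proof -
  have face: "c (e h) = c (vnext \<epsilon> h)" if "h < 3 * v" for h
    using c otgD[OF o that] face_step_less[OF o] by (auto simp: face_chains_def)
  have "face_boundary v e c \<in> edge_chains v e"
    using otgD[OF o] by (auto simp: edge_chains_def mod2_chains_def face_boundary_def)
  moreover have "\<not> vertex_boundary v (face_boundary v e c) i" if i: "i < v" for i
  proof -
    have "3 * i < 3 * v" "3 * i + 1 < 3 * v" "3 * i + 2 < 3 * v"
      using i by auto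
    then have "vertex_boundary v (face_boundary v e c) i =
        ((c (3 * i) \<noteq> c (3 * i + turn (\<epsilon> i) 0)) \<noteq> ((c (3 * i + 1) \<noteq> c (3 * i + turn (\<epsilon> i) 1))
          \<noteq> (c (3 * i + 2) \<noteq> c (3 * i + turn (\<epsilon> i) 2))))"
      using i face vnext_block[of 0 \<epsilon> i] vnext_block[of 1 \<epsilon> i] vnext_block[of 2 \<epsilon> i]
      by (simp add: vertex_boundary_def face_boundary_def)
    then show ?thesis
      by (cases "\<epsilon> i") (auto simp: turn_def)
  qed
  ultimately show ?thesis
    by (simp add: cycles_def)
qed

lemma inj_on_chain_add:
  assumes "A \<subseteq> mod2_chains v" "b \<in> mod2_chains v"
  shows "inj_on (\<lambda>a. chain_add v a b) A"
proof (rule inj_onI)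
  fix a a'
  assume "a \<in> A" "a' \<in> A" and eq: "chain_add v a b = chain_add v a' b"
  then have "a \<in> mod2_chains v" "a' \<in> mod2_chains v"
    using assms(1) by auto
  then have "a = chain_add v (chain_add v a' b) b"
    using chain_add_cancel[of a v b] assms(2) eq by simp
  then show "a = a'"
    using chain_add_cancel[OF \<open>a' \<in> mod2_chains v\<close> assms(2)] by simp
qed

lemma face_chain_block_constant:
  assumes c: "c \<in> face_chains v e \<epsilon>" and edge_const: "\<forall>h<3 * v. c h = c (e h)"
    and o: "otg v e" and h: "h < 3 * v"
  shows "c h = c (3 * (h div 3))"
proof -
  have turn_const: "c h' = c (vnext \<epsilon> h')" if h': "h' < 3 * v" for h'
  proof -
    have "c h' = c (e h')"
      using edge_const h' by blast
    also have "\<dots> = c (vnext \<epsilon> (e (e h')))"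
      using c otgD(1)[OF o h'] unfolding face_chains_def by blast
    finally show ?thesis
      using otgD(3)[OF o h'] by simp
  qed
  define i where "i = h div 3"
  have i: "i < v" "3 * i < 3 * v" "3 * i + 1 < 3 * v" "3 * i + 2 < 3 * v"
    using h unfolding i_def by presburger+
  have "c (3 * i) = c (3 * i + 1) \<and> c (3 * i + 1) = c (3 * i + 2)"
    using turn_const[OF i(2)] turn_const[OF i(3)] turn_const[OF i(4)]
      vnext_block[of 0 \<epsilon> i] vnext_block[of 1 \<epsilon> i] vnext_block[of 2 \<epsilon> i]
    by (cases "\<epsilon> i") (simp_all add: turn_def)
  moreover have "h = 3 * i \<or> h = 3 * i + 1 \<or> h = 3 * i + 2"
    unfolding i_def by presburger
  ultimately show ?thesis
    unfolding i_def[symmetric] by auto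
qed

lemma edge_constant_face_chain:
  assumes o: "otg v e" and cn: "otg_connected v e"
    and c: "c \<in> face_chains v e \<epsilon>" and edge_const: "\<forall>h<3 * v. c h = c (e h)"
  shows "c = restrict (\<lambda>_. c 0) {..<3 * v}"
proof -
  note block = face_chain_block_constant[OF c edge_const o]
  have adjacent: "c (3 * i) = c (3 * j)" if adj: "otg_adj v e i j" for i j
  proof -
    obtain h where h: "h < 3 * v" "h div 3 = i" "e h div 3 = j"
      using adj by (auto simp: otg_adj_def)
    have "c (3 * i) = c h"
      using block[OF h(1)] h(2) by simp
    also have "\<dots> = c (e h)"
      using edge_const h(1) by blast
    also have "\<dots> = c (3 * j)"
      using block[OF otgD(1)[OF o h(1)]] h(3) by simp
    finally show ?thesis .
  qed
  have path: "c (3 * i) = c (3 * j)" if "(otg_adj v e)\<^sup>*\<^sup>* i j" for i j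
    using that by (induction rule: rtranclp_induct) (auto dest: adjacent)
  show ?thesis
  proof (rule mod2_chains_eqI)
    show "c \<in> mod2_chains v"
      using c by (simp add: face_chains_def)
    show "restrict (\<lambda>_. c 0) {..<3 * v} \<in> mod2_chains v"
      by (simp add: mod2_chains_def)
  next
    fix h
    assume h: "h < 3 * v"
    then have "(otg_adj v e)\<^sup>*\<^sup>* 0 (h div 3)"
      using cn by (simp add: otg_connected_def)
    then have "c (3 * 0) = c (3 * (h div 3))"
      by (rule path)
    then show "c h = restrict (\<lambda>_. c 0) {..<3 * v} h"
      using block[OF h] h by simp
  qed
qed

lemma card_face_chains_le:
  assumes o: "otg v e" and cn: "otg_connected v e"
  shows "card (face_chains v e \<epsilon>) \<le> card (face_boundary v e ` face_chains v e \<epsilon>) * 2"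
proof (rule card_le_card_image_mult[OF finite_face_chains])
  fix y
  assume "y \<in> face_boundary v e ` face_chains v e \<epsilon>"
  then obtain c0 where c0: "c0 \<in> face_chains v e \<epsilon>" "y = face_boundary v e c0"
    by blast
  let ?fibre = "{c \<in> face_chains v e \<epsilon>. face_boundary v e c = y}"
  let ?constants = "{restrict (\<lambda>_. True) {..<3 * v}, restrict (\<lambda>_. False) {..<3 * v}}"
  have c0_chain: "c0 \<in> mod2_chains v"
    using c0 by (simp add: face_chains_def)
  have "inj_on (\<lambda>c. chain_add v c c0) ?fibre"
    using c0_chain by (intro inj_on_chain_add) (auto simp: face_chains_def)
  moreover have "(\<lambda>c. chain_add v c c0) ` ?fibre \<subseteq> ?constants"
  proof
    fix d
    assume "d \<in> (\<lambda>c. chain_add v c c0) ` ?fibre"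
    then obtain c where c: "c \<in> face_chains v e \<epsilon>" "face_boundary v e c = face_boundary v e c0"
      and d: "d = chain_add v c c0"
      using c0(2) by blast
    have "d \<in> face_chains v e \<epsilon>"
      unfolding d using chain_add_face_chains[OF o c(1) c0(1)] .
    moreover have "d h = d (e h)" if h: "h < 3 * v" for h
    proof -
      have "(c h \<noteq> c (e h)) = (c0 h \<noteq> c0 (e h))"
        using fun_cong[OF c(2), of h] h by (simp add: face_boundary_def)
      then show ?thesis
        using h otgD(1)[OF o h] by (auto simp: d chain_add_def)
    qed
    ultimately have "d = restrict (\<lambda>_. d 0) {..<3 * v}"
      using edge_constant_face_chain[OF o cn] by blast
    then show "d \<in> ?constants"
      by (cases "d 0") auto
  qed
  ultimately have "card ?fibre \<le> card ?constants"
    by (intro card_inj_on_le) auto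
  also have "\<dots> \<le> 2"
    by (simp add: card_insert_if)
  finally show "card ?fibre \<le> 2" .
qed

lemma card_vertex_boundaries_mult_cycles_le:
  assumes o: "otg v e"
  shows "card (vertex_boundary v ` edge_chains v e) * card (cycles v e) \<le> card (edge_chains v e)"
proof (rule card_image_mult_le_card[OF finite_edge_chains])
  fix w
  assume "w \<in> vertex_boundary v ` edge_chains v e"
  then obtain g0 where g0: "g0 \<in> edge_chains v e" "w = vertex_boundary v g0"
    by blast
  let ?fibre = "{g \<in> edge_chains v e. vertex_boundary v g = w}"
  have g0_chain: "g0 \<in> mod2_chains v"
    using g0 by (simp add: edge_chains_def)
  have "inj_on (\<lambda>z. chain_add v z g0) (cycles v e)"
    using g0_chain by (intro inj_on_chain_add) (auto simp: cycles_def edge_chains_def)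
  moreover have "(\<lambda>z. chain_add v z g0) ` cycles v e \<subseteq> ?fibre"
  proof
    fix g
    assume "g \<in> (\<lambda>z. chain_add v z g0) ` cycles v e"
    then obtain z where z: "z \<in> cycles v e" and g: "g = chain_add v z g0"
      by blast
    have "g \<in> edge_chains v e"
      using z g0(1) by (simp add: g cycles_def chain_add_edge_chains[OF o])
    moreover have "vertex_boundary v g = w"
    proof
      fix i
      show "vertex_boundary v g i = w i"
      proof (cases "i < v")
        case True
        then show ?thesis
          using z by (simp add: g g0(2) cycles_def vertex_boundary_chain_add)
      next
        case False
        then show ?thesis
          by (simp add: g g0(2) vertex_boundary_def)
      qed
    qed
    ultimately show "g \<in> ?fibre"
      by blast
  qed
  ultimately show "card (cycles v e) \<le> card ?fibre"
    by (intro card_inj_on_le) auto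
qed

definition zero_chain :: "nat \<Rightarrow> nat \<Rightarrow> bool" where
  "zero_chain v = restrict (\<lambda>_. False) {..<3 * v}"

definition edge_chain :: "nat \<Rightarrow> (nat \<Rightarrow> nat) \<Rightarrow> nat \<Rightarrow> nat \<Rightarrow> bool" where
  "edge_chain v e h = restrict (\<lambda>d. d = h \<or> d = e h) {..<3 * v}"

lemma zero_chain_in_edge_chains: "otg v e \<Longrightarrow> zero_chain v \<in> edge_chains v e"
  using otgD(1) by (auto simp: zero_chain_def edge_chains_def mod2_chains_def)

lemma vertex_boundary_zero_chain: "k < v \<Longrightarrow> \<not> vertex_boundary v (zero_chain v) k"
  by (simp add: vertex_boundary_def zero_chain_def)

lemma edge_chain_in_edge_chains:
  assumes o: "otg v e" and h: "h < 3 * v"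
  shows "edge_chain v e h \<in> edge_chains v e"
proof -
  have "(d = h \<or> d = e h) = (e d = h \<or> e d = e h)" if "d < 3 * v" for d
    using otgD(3)[OF o that] otgD(3)[OF o h] by metis
  then show ?thesis
    using otgD(1)[OF o] by (auto simp: edge_chain_def edge_chains_def mod2_chains_def)
qed

lemma xor_block_iff_div: "((3 * k = p) \<noteq> ((3 * k + 1 = p) \<noteq> (3 * k + 2 = p))) \<longleftrightarrow> p div 3 = (k::nat)"
  by presburger

lemma vertex_boundary_edge_chain:
  assumes o: "otg v e" and h: "h < 3 * v" and k: "k < v"
  shows "vertex_boundary v (edge_chain v e h) k \<longleftrightarrow> (h div 3 = k) \<noteq> (e h div 3 = k)"
proof -
  have "(d = h \<or> d = e h) = ((d = h) \<noteq> (d = e h))" for d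
    using otgD(2)[OF o h] by auto
  then have "vertex_boundary v (edge_chain v e h) k \<longleftrightarrow>
      ((3 * k = h) \<noteq> ((3 * k + 1 = h) \<noteq> (3 * k + 2 = h))) \<noteq>
      ((3 * k = e h) \<noteq> ((3 * k + 1 = e h) \<noteq> (3 * k + 2 = e h)))"
    using k by (simp add: vertex_boundary_def edge_chain_def) blast
  then show ?thesis
    by (simp only: xor_block_iff_div)
qed

lemma path_boundary:
  assumes o: "otg v e" and path: "(otg_adj v e)\<^sup>*\<^sup>* i j"
  shows "\<exists>g\<in>edge_chains v e. \<forall>k<v. vertex_boundary v g k \<longleftrightarrow> (k = i) \<noteq> (k = j)"
  using path
proof (induction rule: rtranclp_induct)
  case base
  show ?case
    by (intro bexI[OF _ zero_chain_in_edge_chains[OF o]]) (simp add: vertex_boundary_zero_chain)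
next
  case (step a b)
  obtain g where g: "g \<in> edge_chains v e" "\<forall>k<v. vertex_boundary v g k \<longleftrightarrow> (k = i) \<noteq> (k = a)"
    using step.IH by blast
  obtain h where h: "h < 3 * v" "h div 3 = a" "e h div 3 = b"
    using step.hyps(2) by (auto simp: otg_adj_def)
  let ?g' = "chain_add v g (edge_chain v e h)"
  have "?g' \<in> edge_chains v e"
    using chain_add_edge_chains[OF o g(1) edge_chain_in_edge_chains[OF o h(1)]] .
  moreover have "vertex_boundary v ?g' k \<longleftrightarrow> (k = i) \<noteq> (k = b)" if k: "k < v" for k
    using g(2) k vertex_boundary_edge_chain[OF o h(1) k] h(2,3)
    by (simp add: vertex_boundary_chain_add) blast
  ultimately show ?case
    by blast
qed

lemma subset_boundary:
  assumes o: "otg v e" and cn: "otg_connected v e" and S: "S \<subseteq> {1..<v}"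
  shows "\<exists>g\<in>edge_chains v e. \<forall>k\<in>{1..<v}. vertex_boundary v g k \<longleftrightarrow> k \<in> S"
proof -
  have "finite S"
    using S finite_subset by blast
  then show ?thesis
    using S
  proof (induction S rule: finite_induct)
    case empty
    show ?case
      by (intro bexI[OF _ zero_chain_in_edge_chains[OF o]]) (simp add: vertex_boundary_zero_chain)
  next
    case (insert j S)
    obtain g where g: "g \<in> edge_chains v e" "\<forall>k\<in>{1..<v}. vertex_boundary v g k \<longleftrightarrow> k \<in> S"
      using insert by blast
    have "j < v"
      using insert.prems by auto
    then obtain g' where g': "g' \<in> edge_chains v e"
        "\<forall>k<v. vertex_boundary v g' k \<longleftrightarrow> (k = 0) \<noteq> (k = j)"
      using path_boundary[OF o] cn by (simp add: otg_connected_def) blast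
    have "chain_add v g g' \<in> edge_chains v e"
      by (rule chain_add_edge_chains[OF o g(1) g'(1)])
    moreover have "vertex_boundary v (chain_add v g g') k \<longleftrightarrow> k \<in> insert j S" if k: "k \<in> {1..<v}" for k
      using g(2) g'(2) k insert.hyps(2) by (auto simp: vertex_boundary_chain_add)
    ultimately show ?case
      by blast
  qed
qed

lemma card_vertex_boundaries_ge:
  assumes o: "otg v e" and cn: "otg_connected v e"
  shows "2 ^ (v - 1) \<le> card (vertex_boundary v ` edge_chains v e)"
proof -
  let ?restr = "\<lambda>w. {k \<in> {1..<v}. w k}"
  have "Pow {1..<v} \<subseteq> ?restr ` (vertex_boundary v ` edge_chains v e)"
  proof
    fix S
    assume "S \<in> Pow {1..<v}"
    then obtain g where "g \<in> edge_chains v e" "\<forall>k\<in>{1..<v}. vertex_boundary v g k \<longleftrightarrow> k \<in> S"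
      using subset_boundary[OF o cn] by blast
    moreover from this(2) \<open>S \<in> Pow {1..<v}\<close> have "S = ?restr (vertex_boundary v g)"
      by auto
    ultimately show "S \<in> ?restr ` (vertex_boundary v ` edge_chains v e)"
      by blast
  qed
  then have "card (Pow {1..<v}) \<le> card (?restr ` (vertex_boundary v ` edge_chains v e))"
    by (intro card_mono) auto
  also have "\<dots> \<le> card (vertex_boundary v ` edge_chains v e)"
    by (intro card_image_le) simp
  finally show ?thesis
    by (simp add: card_Pow)
qed

lemma faces_le:
  assumes o: "otg v e" and cn: "otg_connected v e"
  shows "2 * faces v e \<epsilon> \<le> v + 4"
proof (cases "v = 0")
  case True
  then show ?thesis
    by (simp add: faces_def)
next
  case False
  have "(2::nat) ^ faces v e \<epsilon> \<le> card (face_boundary v e ` face_chains v e \<epsilon>) * 2"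
    using card_face_chains[OF o] card_face_chains_le[OF o cn] by simp
  also have "card (face_boundary v e ` face_chains v e \<epsilon>) \<le> card (cycles v e)"
    using face_boundary_in_cycles[OF o] by (intro card_mono) auto
  finally have faces: "(2::nat) ^ faces v e \<epsilon> \<le> card (cycles v e) * 2"
    by simp
  have cycles: "2 ^ (v - 1) * card (cycles v e) \<le> 2 ^ card (edge_reps v e)"
  proof -
    have "2 ^ (v - 1) * card (cycles v e) \<le> card (vertex_boundary v ` edge_chains v e) * card (cycles v e)"
      using card_vertex_boundaries_ge[OF o cn] by simp
    also have "\<dots> \<le> card (edge_chains v e)"
      by (rule card_vertex_boundaries_mult_cycles_le[OF o])
    also have "\<dots> \<le> 2 ^ card (edge_reps v e)"
      by (rule card_edge_chains_le[OF o])
    finally show ?thesis .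
  qed
  have "(2::nat) ^ (v - 1 + faces v e \<epsilon>) = 2 ^ (v - 1) * 2 ^ faces v e \<epsilon>"
    by (simp add: power_add)
  also have "\<dots> \<le> 2 ^ (v - 1) * (card (cycles v e) * 2)"
    using faces by simp
  also have "\<dots> \<le> 2 ^ card (edge_reps v e) * 2"
    using cycles by simp
  finally have pow: "(2::nat) ^ (v - 1 + faces v e \<epsilon>) \<le> 2 ^ (card (edge_reps v e) + 1)"
    by simp
  have "v - 1 + faces v e \<epsilon> \<le> card (edge_reps v e) + 1"
    by (rule power_le_imp_le_exp[OF _ pow]) simp
  then show ?thesis
    using card_edge_reps[OF o] False by linarith
qed

theorem mainTheorem1:
  fixes v :: nat and e :: "nat \<Rightarrow> nat"
  assumes "otg v e" and "otg_connected v e"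
  shows "\<exists>p :: complex poly. real (degree p) \<le> real v / 2 + 2 \<and>
           (\<forall>N \<ge> 2. \<forall>B. sl_basis N B \<longrightarrow> W_sl N B v e = poly p (of_nat N))"
proof -
  define p where "p = (\<Sum>\<epsilon>\<in>orientations v. monom (orientation_sign v \<epsilon>) (faces v e \<epsilon>))"
  have "degree p \<le> (v + 4) div 2"
    unfolding p_def
  proof (rule degree_sum_le)
    fix \<epsilon>
    have "degree (monom (orientation_sign v \<epsilon>) (faces v e \<epsilon>)) \<le> faces v e \<epsilon>"
      by (rule degree_monom_le)
    also have "\<dots> \<le> (v + 4) div 2"
      using faces_le[OF assms, of \<epsilon>] by linarith
    finally show "degree (monom (orientation_sign v \<epsilon>) (faces v e \<epsilon>)) \<le> (v + 4) div 2" .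
  qed simp
  then have "2 * degree p \<le> v + 4"
    by linarith
  then have "real (2 * degree p) \<le> real (v + 4)"
    by (simp only: of_nat_le_iff)
  then have "real (degree p) \<le> real v / 2 + 2"
    by simp
  moreover have "W_sl N B v e = poly p (of_nat N)" if "N \<ge> 2" "sl_basis N B" for N B
    using W_sl_eq_ribbon_sum[OF assms(1) that] ribbon_sum_eq_ribbon_sum_0[OF assms(1)]
      ribbon_sum_0[OF assms(1)]
    by (simp add: p_def poly_sum poly_monom)
  ultimately show ?thesis
    by blast
qed

end
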